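(* Let $n\ge3$, let $p:[\mathcal Q:\xi]\to[\mathcal H:\partial]$ be a trivial fibration and $f:[\mathcal Q:\xi]\to[\mathcal G:\delta]$ a morphism of reduced $n$-crossed complexes, and let $\nabla^f=(p,f):\mathcal Q\to\mathcal H\times\mathcal G$. Then the composite $\pi_1\circ\rho:\mathcal Q^{\nabla^f_n}\to\mathcal H\times\mathcal G\to\mathcal H$ (where $\pi_1$ is the projection) is a trivial fibration.
   Context: A reduced $n$-crossed complex $[C:\partial]$ is a sequence of groups and homomorphisms $C_n\xrightarrow{\partial_n}C_{n-1}\to\cdots\to C_2\xrightarrow{\partial_2}C_1$ together with an action of $C_1$ on each $C_k$ ($k\ge2$), such that $\partial_2:C_2\to C_1$ is a crossed module, $C_k$ is abelian for $k\ge3$, each $\partial_k$ is $C_1$-equivariant, $\partial_{k-1}\partial_k$ is trivial, and $\partial_2(C_2)$ acts trivially on $C_k$ for $k\ge3$. Morphisms are families of homomorphisms commuting with differentials and actions; products are degreewise. Homotopy groups: $\pi_1(C)=C_1/\partial_2(C_2)$, $\pi_k(C)=\ker\partial_k/\partial_{k+1}(C_{k+1})$ for $2\le k\le n-1$, $\pi_n(C)=\ker\partial_n$. A weak equivalence induces isomorphisms on all $\pi_k$, $1\le k\le n$; a fibration is surjective in every degree; a trivial fibration is both. The $n$-pushout: given $\nabla:[\mathcal Q:\xi]\to[\mathcal K:\kappa]$ (here $\mathcal K=\mathcal H\times\mathcal G$, $\nabla=(p,f)$), $\mathcal Q^{\nabla_n}$ equals $\mathcal Q$ in degrees $\le n-2$,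 has degree $n$ group $\mathcal K_n$ and degree $n-1$ group $P=\mathcal Q_{n-1}\times^{\mathcal Q_n}\mathcal K_n$, the quotient of the (semi)direct product $\mathcal Q_{n-1}\ltimes\mathcal K_n$ (for $n=3$, $\mathcal Q_2$ acts on $\mathcal K_3$ via $\nabla_1\circ\xi_2$; for $n\ge4$ the product is direct) by the normal subgroup of elements $(\xi_n(x)^{-1},\nabla_n(x))$, $x\in\mathcal Q_n$; elements are written $[a,(b,c)]$. Differentials: $(b,c)\mapsto[1,(b,c)]$ and $[a,(b,c)]\mapsto\xi_{n-1}(a)$. The canonical morphism $\rho:\mathcal Q^{\nabla_n}\to\mathcal K$ is the identity in degree $n$, $[a,(b,c)]\mapsto\nabla_{n-1}(a)\kappa_n(b,c)$ in degree $n-1$, and $\nabla_k$ in degrees $\le n-2$; the canonical $\iota:\mathcal Q\to\mathcal Q^{\nabla_n}$ is $\nabla_n$ in degree $n$, $a\mapsto[a,(1,1)]$ in degree $n-1$, identity below, and $\rho\circ\iota=\nabla$. *)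

theory Defs
  imports "HOL-Algebra.Coset"
begin

text \<open>A (reduced) n-crossed complex: degree k group, boundary d_k : C_k -> C_(k-1),
  action of C_1 on C_k (k >= 2). Only degrees 1..n are meaningful.\<close>
record 'a xcx =
  xgrp :: "nat \<Rightarrow> 'a monoid"
  xbd  :: "nat \<Rightarrow> 'a \<Rightarrow> 'a"
  xact :: "nat \<Rightarrow> 'a \<Rightarrow> 'a \<Rightarrow> 'a"

definition rxc :: "nat \<Rightarrow> 'a xcx \<Rightarrow> bool" where
  "rxc n C \<longleftrightarrow>
     (\<forall>k\<in>{1..n}. group (xgrp C k)) \<and>
     (\<forall>k\<in>{3..n}. comm_group (xgrp C k)) \<and>
     (\<forall>k\<in>{2..n}. xbd C k \<in> hom (xgrp C k) (xgrp C (k-1))) \<and>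
     \<comment> \<open>C_1 acts on each C_k (k >= 2) by group automorphisms\<close>
     (\<forall>k\<in>{2..n}. \<forall>x\<in>carrier (xgrp C 1). xact C k x \<in> hom (xgrp C k) (xgrp C k)) \<and>
     (\<forall>k\<in>{2..n}. \<forall>c\<in>carrier (xgrp C k). xact C k \<one>\<^bsub>xgrp C 1\<^esub> c = c) \<and>
     (\<forall>k\<in>{2..n}. \<forall>x\<in>carrier (xgrp C 1). \<forall>y\<in>carrier (xgrp C 1). \<forall>c\<in>carrier (xgrp C k).
        xact C k (x \<otimes>\<^bsub>xgrp C 1\<^esub> y) c = xact C k x (xact C k y c)) \<and>
     \<comment> \<open>d_2 : C_2 -> C_1 is a crossed module\<close>
     (\<forall>x\<in>carrier (xgrp C 1). \<forall>c\<in>carrier (xgrp C 2).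
        xbd C 2 (xact C 2 x c) = x \<otimes>\<^bsub>xgrp C 1\<^esub> xbd C 2 c \<otimes>\<^bsub>xgrp C 1\<^esub> inv\<^bsub>xgrp C 1\<^esub> x) \<and>
     (\<forall>c\<in>carrier (xgrp C 2). \<forall>c'\<in>carrier (xgrp C 2).
        xact C 2 (xbd C 2 c) c' = c \<otimes>\<^bsub>xgrp C 2\<^esub> c' \<otimes>\<^bsub>xgrp C 2\<^esub> inv\<^bsub>xgrp C 2\<^esub> c) \<and>
     \<comment> \<open>equivariance of d_k, k >= 3\<close>
     (\<forall>k\<in>{3..n}. \<forall>x\<in>carrier (xgrp C 1). \<forall>c\<in>carrier (xgrp C k).
        xbd C k (xact C k x c) = xact C (k-1) x (xbd C k c)) \<and>
     \<comment> \<open>d_(k-1) d_k trivial\<close>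
     (\<forall>k\<in>{3..n}. \<forall>c\<in>carrier (xgrp C k). xbd C (k-1) (xbd C k c) = \<one>\<^bsub>xgrp C (k-2)\<^esub>) \<and>
     \<comment> \<open>d_2(C_2) acts trivially on C_k, k >= 3\<close>
     (\<forall>k\<in>{3..n}. \<forall>c\<in>carrier (xgrp C 2). \<forall>m\<in>carrier (xgrp C k). xact C k (xbd C 2 c) m = m)"

definition xmor :: "nat \<Rightarrow> 'a xcx \<Rightarrow> 'b xcx \<Rightarrow> (nat \<Rightarrow> 'a \<Rightarrow> 'b) \<Rightarrow> bool" where
  "xmor n C D f \<longleftrightarrow>
     (\<forall>k\<in>{1..n}. f k \<in> hom (xgrp C k) (xgrp D k)) \<and>
     (\<forall>k\<in>{2..n}. \<forall>c\<in>carrier (xgrp C k). f (k-1) (xbd C k c) = xbd D k (f k c)) \<and>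
     (\<forall>k\<in>{2..n}. \<forall>x\<in>carrier (xgrp C 1). \<forall>c\<in>carrier (xgrp C k).
        f k (xact C k x c) = xact D k (f 1 x) (f k c))"

definition pi_low :: "nat \<Rightarrow> 'a xcx \<Rightarrow> nat \<Rightarrow> 'a set monoid" where
  "pi_low n C k =
     (if k = 1 then xgrp C 1
      else (xgrp C k)\<lparr>carrier := kernel (xgrp C k) (xgrp C (k-1)) (xbd C k)\<rparr>)
     Mod (xbd C (k+1) ` carrier (xgrp C (k+1)))"

definition pi_top :: "nat \<Rightarrow> 'a xcx \<Rightarrow> 'a monoid" where
  "pi_top n C = (xgrp C n)\<lparr>carrier := kernel (xgrp C n) (xgrp C (n-1)) (xbd C n)\<rparr>"

definition pi_low_map :: "'b xcx \<Rightarrow> (nat \<Rightarrow> 'a \<Rightarrow> 'b) \<Rightarrow> nat \<Rightarrow> 'a set \<Rightarrow> 'b set" where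
  "pi_low_map D f k A = r_coset (xgrp D k) (xbd D (k+1) ` carrier (xgrp D (k+1))) (f k (SOME a. a \<in> A))"

definition weq :: "nat \<Rightarrow> 'a xcx \<Rightarrow> 'b xcx \<Rightarrow> (nat \<Rightarrow> 'a \<Rightarrow> 'b) \<Rightarrow> bool" where
  "weq n C D f \<longleftrightarrow> xmor n C D f \<and>
     (\<forall>k\<in>{1..<n}. pi_low_map D f k \<in> iso (pi_low n C k) (pi_low n D k)) \<and>
     f n \<in> iso (pi_top n C) (pi_top n D)"

definition fib :: "nat \<Rightarrow> 'a xcx \<Rightarrow> 'b xcx \<Rightarrow> (nat \<Rightarrow> 'a \<Rightarrow> 'b) \<Rightarrow> bool" where
  "fib n C D f \<longleftrightarrow> xmor n C D f \<and> (\<forall>k\<in>{1..n}. f k ` carrier (xgrp C k) = carrier (xgrp D k))"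

definition tfib :: "nat \<Rightarrow> 'a xcx \<Rightarrow> 'b xcx \<Rightarrow> (nat \<Rightarrow> 'a \<Rightarrow> 'b) \<Rightarrow> bool" where
  "tfib n C D f \<longleftrightarrow> fib n C D f \<and> weq n C D f"

definition xprod :: "'a xcx \<Rightarrow> 'b xcx \<Rightarrow> ('a \<times> 'b) xcx" where
  "xprod H G = \<lparr> xgrp = (\<lambda>k. xgrp H k \<times>\<times> xgrp G k),
                 xbd = (\<lambda>k (x, y). (xbd H k x, xbd G k y)),
                 xact = (\<lambda>k (u, v) (x, y). (xact H k u x, xact G k v y)) \<rparr>"

definition npair :: "(nat \<Rightarrow> 'q \<Rightarrow> 'a) \<Rightarrow> (nat \<Rightarrow> 'q \<Rightarrow> 'b) \<Rightarrow> nat \<Rightarrow> 'q \<Rightarrow> 'a \<times> 'b" where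
  "npair p f = (\<lambda>k x. (p k x, f k x))"

definition proj1 :: "nat \<Rightarrow> 'a \<times> 'b \<Rightarrow> 'a" where
  "proj1 = (\<lambda>k. fst)"

definition xcomp :: "(nat \<Rightarrow> 'b \<Rightarrow> 'c) \<Rightarrow> (nat \<Rightarrow> 'a \<Rightarrow> 'b) \<Rightarrow> nat \<Rightarrow> 'a \<Rightarrow> 'c" where
  "xcomp g f = (\<lambda>k x. g k (f k x))"

text \<open>The n-pushout Q^{nabla_n}. Its elements live in a sum type: degrees <= n-2 are
  elements of Q, degree n-1 are classes [a,k] (cosets in Q_(n-1) x| K_n), degree n
  elements of K_n.\<close>
datatype ('q, 'k) po = PLow (lowv: 'q) | PMid (midv: "('q \<times> 'k) set") | PTop (topv: 'k)

definition lift_monoid :: "('a \<Rightarrow> 'b) \<Rightarrow> ('b \<Rightarrow> 'a) \<Rightarrow> ('a, 'c) monoid_scheme \<Rightarrow> 'b monoid" where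
  "lift_monoid \<phi> \<psi> G = \<lparr> carrier = \<phi> ` carrier G,
                          mult = (\<lambda>x y. \<phi> (\<psi> x \<otimes>\<^bsub>G\<^esub> \<psi> y)),
                          one = \<phi> \<one>\<^bsub>G\<^esub> \<rparr>"

text \<open>Q_(n-1) x| K_n: (a,k)(a',k') = (a a', (a'^-1 . k) k'), where for n = 3 the element
  a' in Q_2 acts on K_3 via nabla_1(xi_2 a'); for n >= 4 this is the direct product.\<close>
definition po_sd :: "nat \<Rightarrow> 'q xcx \<Rightarrow> 'k xcx \<Rightarrow> (nat \<Rightarrow> 'q \<Rightarrow> 'k) \<Rightarrow> ('q \<times> 'k) monoid" where
  "po_sd n Q K nab =
     \<lparr> carrier = carrier (xgrp Q (n-1)) \<times> carrier (xgrp K n),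
       mult = (\<lambda>(a, k) (a', k').
                 (a \<otimes>\<^bsub>xgrp Q (n-1)\<^esub> a',
                  (if n = 3 then xact K n (nab 1 (xbd Q (n-1) (inv\<^bsub>xgrp Q (n-1)\<^esub> a'))) k else k)
                    \<otimes>\<^bsub>xgrp K n\<^esub> k')),
       one = (\<one>\<^bsub>xgrp Q (n-1)\<^esub>, \<one>\<^bsub>xgrp K n\<^esub>) \<rparr>"

definition po_N :: "nat \<Rightarrow> 'q xcx \<Rightarrow> 'k xcx \<Rightarrow> (nat \<Rightarrow> 'q \<Rightarrow> 'k) \<Rightarrow> ('q \<times> 'k) set" where
  "po_N n Q K nab = (\<lambda>x. (inv\<^bsub>xgrp Q (n-1)\<^esub> (xbd Q n x), nab n x)) ` carrier (xgrp Q n)"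

definition po_P :: "nat \<Rightarrow> 'q xcx \<Rightarrow> 'k xcx \<Rightarrow> (nat \<Rightarrow> 'q \<Rightarrow> 'k) \<Rightarrow> ('q \<times> 'k) set monoid" where
  "po_P n Q K nab = po_sd n Q K nab Mod po_N n Q K nab"

definition pushout :: "nat \<Rightarrow> 'q xcx \<Rightarrow> 'k xcx \<Rightarrow> (nat \<Rightarrow> 'q \<Rightarrow> 'k) \<Rightarrow> ('q, 'k) po xcx" where
  "pushout n Q K nab =
    \<lparr> xgrp = (\<lambda>k. if k \<le> n - 2 then lift_monoid PLow lowv (xgrp Q k)
                 else if k = n - 1 then lift_monoid PMid midv (po_P n Q K nab)
                 else lift_monoid PTop topv (xgrp K k)),
      xbd = (\<lambda>k x. if k \<le> n - 2 then PLow (xbd Q k (lowv x))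
                   else if k = n - 1 then PLow (xbd Q (n-1) (fst (SOME p. p \<in> midv x)))
                   else PMid (r_coset (po_sd n Q K nab) (po_N n Q K nab)
                                (\<one>\<^bsub>xgrp Q (n-1)\<^esub>, topv x))),
      xact = (\<lambda>k x c. if k \<le> n - 2 then PLow (xact Q k (lowv x) (lowv c))
                      else if k = n - 1 then
                        PMid ((\<lambda>(a, m). (xact Q (n-1) (lowv x) a, xact K n (nab 1 (lowv x)) m)) ` midv c)
                      else PTop (xact K k (nab 1 (lowv x)) (topv c))) \<rparr>"

definition po_rho :: "nat \<Rightarrow> 'q xcx \<Rightarrow> 'k xcx \<Rightarrow> (nat \<Rightarrow> 'q \<Rightarrow> 'k) \<Rightarrow> nat \<Rightarrow> ('q, 'k) po \<Rightarrow> 'k" where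
  "po_rho n Q K nab k x =
     (if k \<le> n - 2 then nab k (lowv x)
      else if k = n - 1 then
        (case SOME p. p \<in> midv x of (a, m) \<Rightarrow> nab (n-1) a \<otimes>\<^bsub>xgrp K (n-1)\<^esub> xbd K n m)
      else topv x)"

end

theory Submission
  imports Defs
begin

text \<open>Write \<open>\<rho>\<^sub>1 = \<pi>\<^sub>1 \<circ> \<rho>\<close>. In degrees \<open>\<le> n - 2\<close> it is \<open>p\<close>, on \<open>[a, (b, c)]\<close> it is
  \<open>p(a) \<partial>(b)\<close>, and on \<open>(b, c)\<close> it is \<open>b\<close>; so it is a morphism, and surjective because \<open>p\<close> is.
  Below degree \<open>n - 1\<close> the pushout coincides with \<open>Q\<close> (its boundaries in degree \<open>n - 2\<close> are
  \<open>\<partial>[a, k] = \<xi>(a)\<close>), so \<open>\<rho>\<^sub>1\<close> induces the same maps on \<open>\<pi>\<^sub>k\<close> as \<open>p\<close>. In degree \<open>n - 1\<close> a cycle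
  \<open>[a, k]\<close> has \<open>\<xi>(a) = 1\<close> and is homologous to \<open>[a, 1]\<close>, because \<open>[1, k]\<close> is a boundary; if its image
  \<open>p(a) \<partial>(b)\<close> is a boundary, so is \<open>p(a)\<close>, hence \<open>a = \<xi>(x)\<close>, and the relation \<open>(\<xi>(x)\<^sup>-\<^sup>1, \<nabla>(x))\<close>
  moves \<open>[a, k]\<close> into the boundaries. In degree \<open>n\<close>, \<open>(b, c)\<close> is a cycle iff \<open>(1, (b, c))\<close> is a
  relation, i.e. \<open>(b, c) = \<nabla>(x)\<close> with \<open>\<xi>(x) = 1\<close>; so \<open>\<pi>\<^sub>n\<close> of the pushout is \<open>\<pi>\<^sub>n(Q)\<close>, and \<open>\<rho>\<^sub>1\<close> acts
  there as \<open>p\<close>.\<close>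

section \<open>Maps induced on quotient groups\<close>

locale quotient_hom = group_hom G H h + N: normal N G + M: normal M H
  for G (structure) and H (structure) and h and N and M +
  assumes image_subset: "h ` N \<subseteq> M"
begin

lemma induced_rcos:
  assumes a: "a \<in> carrier G"
  shows "M #>\<^bsub>H\<^esub> h (SOME x. x \<in> N #> a) = M #>\<^bsub>H\<^esub> h a"
proof -
  have "(SOME x. x \<in> N #> a) \<in> N #> a"
    using G.rcos_self[OF a N.subgroup_axioms] by (rule someI)
  then obtain b where b: "b \<in> N" "(SOME x. x \<in> N #> a) = b \<otimes> a"
    unfolding r_coset_def by auto
  have bG: "b \<in> carrier G" using b(1) N.subset by blast
  have "M #>\<^bsub>H\<^esub> h (b \<otimes> a) = (M #>\<^bsub>H\<^esub> h b) #>\<^bsub>H\<^esub> h a"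
    using a bG by (simp add: H.coset_mult_assoc M.subset)
  also have "M #>\<^bsub>H\<^esub> h b = M"
    using b bG image_subset by (intro H.coset_join2) (auto simp: M.subgroup_axioms)
  finally show ?thesis using b(2) by simp
qed

lemma induced_hom: "(\<lambda>A. M #>\<^bsub>H\<^esub> h (SOME a. a \<in> A)) \<in> hom (G Mod N) (H Mod M)"
proof (rule homI)
  fix X assume "X \<in> carrier (G Mod N)"
  then obtain a where "a \<in> carrier G" "X = N #> a" by (auto simp: carrier_FactGroup)
  then show "M #>\<^bsub>H\<^esub> h (SOME a. a \<in> X) \<in> carrier (H Mod M)"
    by (simp add: induced_rcos carrier_FactGroup)
next
  fix X Y assume "X \<in> carrier (G Mod N)" "Y \<in> carrier (G Mod N)"
  then obtain a b where "a \<in> carrier G" "X = N #> a" "b \<in> carrier G" "Y = N #> b"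
    by (auto simp: carrier_FactGroup)
  then show "M #>\<^bsub>H\<^esub> h (SOME c. c \<in> X \<otimes>\<^bsub>G Mod N\<^esub> Y) =
      (M #>\<^bsub>H\<^esub> h (SOME a. a \<in> X)) \<otimes>\<^bsub>H Mod M\<^esub> (M #>\<^bsub>H\<^esub> h (SOME b. b \<in> Y))"
    by (simp add: N.rcos_sum M.rcos_sum induced_rcos)
qed

lemma induced_surj_iff:
  "(\<lambda>A. M #>\<^bsub>H\<^esub> h (SOME a. a \<in> A)) ` carrier (G Mod N) = carrier (H Mod M) \<longleftrightarrow>
   (\<forall>y\<in>carrier H. \<exists>x\<in>carrier G. M #>\<^bsub>H\<^esub> h x = M #>\<^bsub>H\<^esub> y)"
proof -
  have img: "(\<lambda>A. M #>\<^bsub>H\<^esub> h (SOME a. a \<in> A)) ` carrier (G Mod N) = (\<lambda>x. M #>\<^bsub>H\<^esub> h x) ` carrier G"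
    by (force simp: carrier_FactGroup induced_rcos)
  have "(\<lambda>x. M #>\<^bsub>H\<^esub> h x) ` carrier G = (\<lambda>y. M #>\<^bsub>H\<^esub> y) ` carrier H \<longleftrightarrow>
      (\<forall>y\<in>carrier H. \<exists>x\<in>carrier G. M #>\<^bsub>H\<^esub> h x = M #>\<^bsub>H\<^esub> y)"
  proof
    assume "(\<lambda>x. M #>\<^bsub>H\<^esub> h x) ` carrier G = (\<lambda>y. M #>\<^bsub>H\<^esub> y) ` carrier H"
    then show "\<forall>y\<in>carrier H. \<exists>x\<in>carrier G. M #>\<^bsub>H\<^esub> h x = M #>\<^bsub>H\<^esub> y"
      by (metis imageE image_eqI)
  next
    assume "\<forall>y\<in>carrier H. \<exists>x\<in>carrier G. M #>\<^bsub>H\<^esub> h x = M #>\<^bsub>H\<^esub> y"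
    then show "(\<lambda>x. M #>\<^bsub>H\<^esub> h x) ` carrier G = (\<lambda>y. M #>\<^bsub>H\<^esub> y) ` carrier H"
      by (auto simp: image_iff) (metis hom_closed)
  qed
  then show ?thesis unfolding img by (simp only: carrier_FactGroup)
qed

lemma induced_inj_iff:
  "inj_on (\<lambda>A. M #>\<^bsub>H\<^esub> h (SOME a. a \<in> A)) (carrier (G Mod N)) \<longleftrightarrow>
   (\<forall>x\<in>carrier G. h x \<in> M \<longrightarrow> x \<in> N)"
proof
  assume inj: "inj_on (\<lambda>A. M #>\<^bsub>H\<^esub> h (SOME a. a \<in> A)) (carrier (G Mod N))"
  show "\<forall>x\<in>carrier G. h x \<in> M \<longrightarrow> x \<in> N"
  proof (intro ballI impI)
    fix x assume x: "x \<in> carrier G" and hx: "h x \<in> M"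
    have "M #>\<^bsub>H\<^esub> h x = M #>\<^bsub>H\<^esub> h \<one>"
      using x hx by (simp add: H.coset_join2 M.subgroup_axioms M.subset)
    then have "M #>\<^bsub>H\<^esub> h (SOME a. a \<in> N #> x) = M #>\<^bsub>H\<^esub> h (SOME a. a \<in> N #> \<one>)"
      using x by (simp add: induced_rcos)
    moreover have "N #> x \<in> carrier (G Mod N)" "N #> \<one> \<in> carrier (G Mod N)"
      using x by (auto simp: carrier_FactGroup)
    ultimately have "N #> x = N #> \<one>" using inj by (auto dest: inj_onD)
    then show "x \<in> N" using G.coset_join1 x N.subgroup_axioms N.subset by simp
  qed
next
  assume ker: "\<forall>x\<in>carrier G. h x \<in> M \<longrightarrow> x \<in> N"
  show "inj_on (\<lambda>A. M #>\<^bsub>H\<^esub> h (SOME a. a \<in> A)) (carrier (G Mod N))"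
  proof (rule inj_onI)
    fix X Y assume "X \<in> carrier (G Mod N)" "Y \<in> carrier (G Mod N)"
      and eq: "M #>\<^bsub>H\<^esub> h (SOME a. a \<in> X) = M #>\<^bsub>H\<^esub> h (SOME a. a \<in> Y)"
    then obtain a b where a: "a \<in> carrier G" "X = N #> a" and b: "b \<in> carrier G" "Y = N #> b"
      by (auto simp: carrier_FactGroup)
    have "h a \<in> M #>\<^bsub>H\<^esub> h b"
      using eq a b by (simp add: induced_rcos H.repr_independenceD M.subgroup_axioms)
    then have "h (a \<otimes> inv b) \<in> M"
      using M.rcos_module_imp[OF H.is_group] a b by simp
    then have "a \<in> N #> b"
      using ker a b by (simp add: N.rcos_module_rev[OF G.is_group])
    then show "X = Y" using a b G.repr_independence N.subgroup_axioms by metis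
  qed
qed

lemma induced_iso_iff:
  "(\<lambda>A. M #>\<^bsub>H\<^esub> h (SOME a. a \<in> A)) \<in> iso (G Mod N) (H Mod M) \<longleftrightarrow>
   (\<forall>y\<in>carrier H. \<exists>x\<in>carrier G. M #>\<^bsub>H\<^esub> h x = M #>\<^bsub>H\<^esub> y) \<and> (\<forall>x\<in>carrier G. h x \<in> M \<longrightarrow> x \<in> N)"
  using induced_hom induced_surj_iff induced_inj_iff by (auto simp: iso_def bij_betw_def)

end

lemma (in normal) hom_some_rcos:
  assumes g: "g \<in> hom G T" and T: "group T" and triv: "\<And>x. x \<in> H \<Longrightarrow> g x = \<one>\<^bsub>T\<^esub>"
    and u: "u \<in> carrier G"
  shows "g (SOME w. w \<in> H #> u) = g u"
proof -
  have "(SOME w. w \<in> H #> u) \<in> H #> u"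
    using rcos_self[OF u subgroup_axioms] by (rule someI)
  then obtain x where x: "x \<in> H" "(SOME w. w \<in> H #> u) = x \<otimes> u"
    unfolding r_coset_def by auto
  have "g (x \<otimes> u) = g x \<otimes>\<^bsub>T\<^esub> g u" using x(1) subset u g by (auto simp: hom_mult)
  also have "\<dots> = g u" using x(1) triv g u T by (simp add: hom_in_carrier group.is_monoid)
  finally show ?thesis using x(2) by simp
qed

section \<open>Reduced crossed complexes\<close>

lemma rxc_group: "rxc n C \<Longrightarrow> 1 \<le> k \<Longrightarrow> k \<le> n \<Longrightarrow> group (xgrp C k)"
  by (simp add: rxc_def)
lemma rxc_comm_group: "rxc n C \<Longrightarrow> 3 \<le> k \<Longrightarrow> k \<le> n \<Longrightarrow> comm_group (xgrp C k)"
  by (simp add: rxc_def)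
lemma rxc_bd_hom: "rxc n C \<Longrightarrow> 2 \<le> k \<Longrightarrow> k \<le> n \<Longrightarrow> xbd C k \<in> hom (xgrp C k) (xgrp C (k-1))"
  by (simp add: rxc_def)
lemma rxc_act_hom: "rxc n C \<Longrightarrow> 2 \<le> k \<Longrightarrow> k \<le> n \<Longrightarrow> x \<in> carrier (xgrp C 1) \<Longrightarrow>
   xact C k x \<in> hom (xgrp C k) (xgrp C k)"
  by (simp add: rxc_def)
lemma rxc_act_one: "rxc n C \<Longrightarrow> 2 \<le> k \<Longrightarrow> k \<le> n \<Longrightarrow> c \<in> carrier (xgrp C k) \<Longrightarrow>
   xact C k \<one>\<^bsub>xgrp C 1\<^esub> c = c"
  by (simp add: rxc_def)
lemma rxc_act_mult: "rxc n C \<Longrightarrow> 2 \<le> k \<Longrightarrow> k \<le> n \<Longrightarrow> x \<in> carrier (xgrp C 1) \<Longrightarrow>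
   y \<in> carrier (xgrp C 1) \<Longrightarrow> c \<in> carrier (xgrp C k) \<Longrightarrow>
   xact C k (x \<otimes>\<^bsub>xgrp C 1\<^esub> y) c = xact C k x (xact C k y c)"
  by (simp add: rxc_def)
lemma rxc_bd2_act: "rxc n C \<Longrightarrow> x \<in> carrier (xgrp C 1) \<Longrightarrow> c \<in> carrier (xgrp C 2) \<Longrightarrow>
   xbd C 2 (xact C 2 x c) = x \<otimes>\<^bsub>xgrp C 1\<^esub> xbd C 2 c \<otimes>\<^bsub>xgrp C 1\<^esub> inv\<^bsub>xgrp C 1\<^esub> x"
  by (simp add: rxc_def)
lemma rxc_peiffer: "rxc n C \<Longrightarrow> c \<in> carrier (xgrp C 2) \<Longrightarrow> c' \<in> carrier (xgrp C 2) \<Longrightarrow>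
   xact C 2 (xbd C 2 c) c' = c \<otimes>\<^bsub>xgrp C 2\<^esub> c' \<otimes>\<^bsub>xgrp C 2\<^esub> inv\<^bsub>xgrp C 2\<^esub> c"
  by (simp add: rxc_def)
lemma rxc_bd_act: "rxc n C \<Longrightarrow> 3 \<le> k \<Longrightarrow> k \<le> n \<Longrightarrow> x \<in> carrier (xgrp C 1) \<Longrightarrow>
   c \<in> carrier (xgrp C k) \<Longrightarrow> xbd C k (xact C k x c) = xact C (k-1) x (xbd C k c)"
  by (simp add: rxc_def)
lemma rxc_bd_bd: "rxc n C \<Longrightarrow> 3 \<le> k \<Longrightarrow> k \<le> n \<Longrightarrow> c \<in> carrier (xgrp C k) \<Longrightarrow>
   xbd C (k-1) (xbd C k c) = \<one>\<^bsub>xgrp C (k-2)\<^esub>"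
  by (simp add: rxc_def)
lemma rxc_act_bd2: "rxc n C \<Longrightarrow> 3 \<le> k \<Longrightarrow> k \<le> n \<Longrightarrow> c \<in> carrier (xgrp C 2) \<Longrightarrow>
   m \<in> carrier (xgrp C k) \<Longrightarrow> xact C k (xbd C 2 c) m = m"
  by (simp add: rxc_def)

lemma rxc_bd_group_hom:
  "rxc n C \<Longrightarrow> 2 \<le> k \<Longrightarrow> k \<le> n \<Longrightarrow> group_hom (xgrp C k) (xgrp C (k-1)) (xbd C k)"
  using rxc_group[of n C k] rxc_group[of n C "k-1"] rxc_bd_hom[of n C k]
  by (simp add: group_hom_def group_hom_axioms_def)
lemma rxc_act_group_hom: "rxc n C \<Longrightarrow> 2 \<le> k \<Longrightarrow> k \<le> n \<Longrightarrow> x \<in> carrier (xgrp C 1) \<Longrightarrow>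
   group_hom (xgrp C k) (xgrp C k) (xact C k x)"
  by (simp add: group_hom_def group_hom_axioms_def rxc_group rxc_act_hom)

lemma xmor_hom: "xmor n C D f \<Longrightarrow> 1 \<le> k \<Longrightarrow> k \<le> n \<Longrightarrow> f k \<in> hom (xgrp C k) (xgrp D k)"
  by (simp add: xmor_def)
lemma xmor_bd: "xmor n C D f \<Longrightarrow> 2 \<le> k \<Longrightarrow> k \<le> n \<Longrightarrow> c \<in> carrier (xgrp C k) \<Longrightarrow>
   f (k-1) (xbd C k c) = xbd D k (f k c)"
  by (simp add: xmor_def)
lemma xmor_act: "xmor n C D f \<Longrightarrow> 2 \<le> k \<Longrightarrow> k \<le> n \<Longrightarrow> x \<in> carrier (xgrp C 1) \<Longrightarrow>
   c \<in> carrier (xgrp C k) \<Longrightarrow> f k (xact C k x c) = xact D k (f 1 x) (f k c)"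
  by (simp add: xmor_def)
lemma xmor_group_hom: "rxc n C \<Longrightarrow> rxc n D \<Longrightarrow> xmor n C D f \<Longrightarrow> 1 \<le> k \<Longrightarrow> k \<le> n \<Longrightarrow>
   group_hom (xgrp C k) (xgrp D k) (f k)"
  by (simp add: group_hom_def group_hom_axioms_def rxc_group xmor_hom)

lemma rxc_cycle_central:
  assumes C: "rxc n C" and k: "2 \<le> k" "k \<le> n"
    and a: "a \<in> carrier (xgrp C k)" "xbd C k a = \<one>\<^bsub>xgrp C (k-1)\<^esub>" and b: "b \<in> carrier (xgrp C k)"
  shows "a \<otimes>\<^bsub>xgrp C k\<^esub> b = b \<otimes>\<^bsub>xgrp C k\<^esub> a"
proof (cases "k = 2")
  case True
  interpret C2: group "xgrp C 2" using rxc_group[OF C, of 2] k True by simp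
  have "a \<otimes>\<^bsub>xgrp C 2\<^esub> b \<otimes>\<^bsub>xgrp C 2\<^esub> inv\<^bsub>xgrp C 2\<^esub> a = b"
    using rxc_peiffer[OF C, of a b] rxc_act_one[OF C, of 2 b] a b k True by simp
  then show ?thesis using a b True by (metis C2.inv_closed C2.inv_solve_right C2.m_closed)
next
  case False
  interpret comm_group "xgrp C k" using rxc_comm_group[OF C] k False by simp
  show ?thesis using a b m_comm by simp
qed

lemma rxc_bd_central:
  assumes C: "rxc n C" and k: "3 \<le> k" "k \<le> n"
    and c: "c \<in> carrier (xgrp C k)" and b: "b \<in> carrier (xgrp C (k-1))"
  shows "xbd C k c \<otimes>\<^bsub>xgrp C (k-1)\<^esub> b = b \<otimes>\<^bsub>xgrp C (k-1)\<^esub> xbd C k c"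
proof (rule rxc_cycle_central[OF C])
  show "xbd C k c \<in> carrier (xgrp C (k-1))" using rxc_bd_hom[OF C, of k] c k by (auto simp: hom_def)
  show "xbd C (k-1) (xbd C k c) = \<one>\<^bsub>xgrp C (k-1-1)\<^esub>" using rxc_bd_bd[OF C k c] by (simp add: numeral_2_eq_2)
qed (use k b in auto)

definition cycle_grp :: "'a xcx \<Rightarrow> nat \<Rightarrow> 'a monoid" where
  "cycle_grp C k = (if k = 1 then xgrp C 1
     else (xgrp C k)\<lparr>carrier := kernel (xgrp C k) (xgrp C (k-1)) (xbd C k)\<rparr>)"

definition boundaries :: "'a xcx \<Rightarrow> nat \<Rightarrow> 'a set" where
  "boundaries C k = xbd C (k+1) ` carrier (xgrp C (k+1))"

lemma pi_low_eq: "pi_low n C k = cycle_grp C k Mod boundaries C k"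
  by (simp add: pi_low_def cycle_grp_def boundaries_def)

lemma pi_low_map_eq:
  "pi_low_map D f k = (\<lambda>A. boundaries D k #>\<^bsub>cycle_grp D k\<^esub> f k (SOME a. a \<in> A))"
  by (simp add: pi_low_map_def cycle_grp_def boundaries_def r_coset_def fun_eq_iff)

lemma cycle_grp_mult [simp]: "x \<otimes>\<^bsub>cycle_grp C k\<^esub> y = x \<otimes>\<^bsub>xgrp C k\<^esub> y"
  by (simp add: cycle_grp_def)

lemma r_coset_cycle_grp [simp]: "A #>\<^bsub>cycle_grp C k\<^esub> a = A #>\<^bsub>xgrp C k\<^esub> a"
  by (simp add: r_coset_def cycle_grp_def)

lemma carrier_cycle_grp: "carrier (cycle_grp C k) =
   (if k = 1 then carrier (xgrp C 1) else kernel (xgrp C k) (xgrp C (k-1)) (xbd C k))"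
  by (simp add: cycle_grp_def)

lemma rxc_boundaries1_normal:
  assumes C: "rxc n C" and n: "2 \<le> n"
  shows "boundaries C 1 \<lhd> xgrp C 1"
proof -
  interpret C1: group "xgrp C 1" using rxc_group[OF C] n by simp
  interpret d: group_hom "xgrp C 2" "xgrp C 1" "xbd C 2" using rxc_bd_group_hom[OF C, of 2] n by simp
  have B: "boundaries C 1 = xbd C 2 ` carrier (xgrp C 2)"
    by (simp add: boundaries_def numeral_2_eq_2)
  show ?thesis unfolding C1.normal_inv_iff B
  proof (intro conjI ballI d.img_is_subgroup)
    fix x h assume x: "x \<in> carrier (xgrp C 1)" and "h \<in> xbd C 2 ` carrier (xgrp C 2)"
    then obtain c where c: "c \<in> carrier (xgrp C 2)" "h = xbd C 2 c" by auto
    have "xact C 2 x c \<in> carrier (xgrp C 2)"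
      using rxc_act_hom[OF C _ _ x, of 2] n c by (auto simp: hom_def)
    then show "x \<otimes>\<^bsub>xgrp C 1\<^esub> h \<otimes>\<^bsub>xgrp C 1\<^esub> inv\<^bsub>xgrp C 1\<^esub> x \<in> xbd C 2 ` carrier (xgrp C 2)"
      using rxc_bd2_act[OF C x c(1)] c(2) by (metis image_eqI)
  qed
qed

lemma rxc_cycle_grp:
  assumes C: "rxc n C" and k: "1 \<le> k" "k < n"
  shows "group (cycle_grp C k)" and "boundaries C k \<lhd> cycle_grp C k"
proof -
  have "group (cycle_grp C k) \<and> boundaries C k \<lhd> cycle_grp C k"
  proof (cases "k = 1")
    case True
    then show ?thesis using rxc_boundaries1_normal[OF C] rxc_group[OF C] k
      by (simp add: cycle_grp_def normal_def)
  next
    case False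
    interpret d: group_hom "xgrp C k" "xgrp C (k-1)" "xbd C k" using rxc_bd_group_hom[OF C] k False by simp
    interpret e: group_hom "xgrp C (k+1)" "xgrp C k" "xbd C (k+1)"
      using rxc_bd_group_hom[OF C, of "k+1"] k by simp
    let ?Z = "kernel (xgrp C k) (xgrp C (k-1)) (xbd C k)"
    have Z: "subgroup ?Z (xgrp C k)" by (rule d.subgroup_kernel)
    have B: "subgroup (boundaries C k) (xgrp C k)" unfolding boundaries_def by (rule e.img_is_subgroup)
    have BZ: "boundaries C k \<subseteq> ?Z"
      using rxc_bd_bd[OF C, of "k+1"] e.hom_closed k False by (auto simp: boundaries_def kernel_def)
    have "comm_group (cycle_grp C k)"
    proof (rule group.group_comm_groupI)
      show "group (cycle_grp C k)" using False d.G.subgroup_imp_group[OF Z] by (simp add: cycle_grp_def)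
      show "x \<otimes>\<^bsub>cycle_grp C k\<^esub> y = y \<otimes>\<^bsub>cycle_grp C k\<^esub> x"
        if "x \<in> carrier (cycle_grp C k)" "y \<in> carrier (cycle_grp C k)" for x y
        using that rxc_cycle_central[OF C, of k x y] k False by (simp add: cycle_grp_def kernel_def)
    qed
    moreover have "subgroup (boundaries C k) (cycle_grp C k)"
      using d.G.subgroup_incl[OF B Z BZ] False by (simp add: cycle_grp_def)
    ultimately show ?thesis by (simp add: comm_group.subgroup_imp_normal comm_group.axioms(2))
  qed
  then show "group (cycle_grp C k)" and "boundaries C k \<lhd> cycle_grp C k" by auto
qed

lemma xmor_cycle_grp:
  assumes C: "\<And>j. 1 \<le> j \<Longrightarrow> j \<le> n \<Longrightarrow> group (xgrp C j)" and D: "rxc n D"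
    and f: "xmor n C D f" and k: "1 \<le> k" "k < n"
  shows "f k \<in> hom (cycle_grp C k) (cycle_grp D k)"
proof (cases "k = 1")
  case True
  then show ?thesis using xmor_hom[OF f, of 1] k by (simp add: cycle_grp_def)
next
  case False
  interpret g: group_hom "xgrp C (k-1)" "xgrp D (k-1)" "f (k-1)"
    using C[of "k-1"] rxc_group[OF D, of "k-1"] xmor_hom[OF f, of "k-1"] k False
    by (simp add: group_hom_def group_hom_axioms_def)
  have "f k x \<in> carrier (cycle_grp D k)" if "x \<in> carrier (cycle_grp C k)" for x
    using that xmor_bd[OF f, of k x] xmor_hom[OF f, of k] g.hom_one k False
    by (auto simp: carrier_cycle_grp kernel_def hom_def)
  moreover have "carrier (cycle_grp C k) \<subseteq> carrier (xgrp C k)"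
    using False by (auto simp: carrier_cycle_grp kernel_def)
  ultimately show ?thesis using xmor_hom[OF f, of k] k by (auto simp: hom_def Pi_def subset_iff)
qed

lemma xmor_boundaries:
  assumes f: "xmor n C D f" and k: "1 \<le> k" "k < n"
  shows "f k ` boundaries C k \<subseteq> boundaries D k"
  using xmor_bd[OF f, of "k+1"] xmor_hom[OF f, of "k+1"] k
  by (force simp: boundaries_def hom_def)

lemma pi_low_map_iso_iff:
  assumes C: "\<And>j. 1 \<le> j \<Longrightarrow> j \<le> n \<Longrightarrow> group (xgrp C j)" and D: "rxc n D"
    and f: "xmor n C D f" and k: "1 \<le> k" "k < n"
    and ZC: "group (cycle_grp C k)" and BC: "boundaries C k \<lhd> cycle_grp C k"
  shows "pi_low_map D f k \<in> iso (pi_low n C k) (pi_low n D k) \<longleftrightarrow>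
    (\<forall>y\<in>carrier (cycle_grp D k). \<exists>x\<in>carrier (cycle_grp C k).
       boundaries D k #>\<^bsub>xgrp D k\<^esub> f k x = boundaries D k #>\<^bsub>xgrp D k\<^esub> y) \<and>
    (\<forall>x\<in>carrier (cycle_grp C k). f k x \<in> boundaries D k \<longrightarrow> x \<in> boundaries C k)"
proof -
  interpret quotient_hom "cycle_grp C k" "cycle_grp D k" "f k" "boundaries C k" "boundaries D k"
    using ZC BC rxc_cycle_grp[OF D k] xmor_cycle_grp[OF C D f k] xmor_boundaries[OF f k]
    by (simp add: quotient_hom_def quotient_hom_axioms_def group_hom_def group_hom_axioms_def)
  show ?thesis using induced_iso_iff by (simp add: pi_low_eq pi_low_map_eq)
qed

lemma xgrp_xprod [simp]: "xgrp (xprod H G) k = xgrp H k \<times>\<times> xgrp G k"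
  by (simp add: xprod_def)
lemma xbd_xprod [simp]: "xbd (xprod H G) k (x, y) = (xbd H k x, xbd G k y)"
  by (simp add: xprod_def)
lemma xact_xprod [simp]: "xact (xprod H G) k (u, v) (x, y) = (xact H k u x, xact G k v y)"
  by (simp add: xprod_def)

lemma hom_DirProd_map:
  "f \<in> hom A C \<Longrightarrow> g \<in> hom B D \<Longrightarrow> (\<lambda>(x, y). (f x, g y)) \<in> hom (A \<times>\<times> B) (C \<times>\<times> D)"
  by (auto simp: hom_def)

lemma rxc_xprod:
  assumes H: "rxc n H" and G: "rxc n G" and n: "2 \<le> n"
  shows "rxc n (xprod H G)"
proof -
  have grp: "group (xgrp H k)" "group (xgrp G k)" if "1 \<le> k" "k \<le> n" for k
    using that rxc_group[OF H] rxc_group[OF G] by auto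
  have bd: "xbd (xprod H G) k = (\<lambda>(x, y). (xbd H k x, xbd G k y))" for k
    by (simp add: xprod_def)
  have act: "xact (xprod H G) k (u, v) = (\<lambda>(x, y). (xact H k u x, xact G k v y))" for k u v
    by (simp add: xprod_def)
  show ?thesis unfolding rxc_def
  proof (intro conjI ballI)
    fix k assume "k \<in> {1..n}"
    then show "group (xgrp (xprod H G) k)" using grp by (simp add: DirProd_group)
  next
    fix k assume "k \<in> {3..n}"
    then interpret h: comm_group "xgrp H k" + g: comm_group "xgrp G k"
      using rxc_comm_group[OF H] rxc_comm_group[OF G] by auto
    show "comm_group (xgrp (xprod H G) k)"
      by (rule group.group_comm_groupI) (auto simp: DirProd_group h.is_group g.is_group h.m_comm g.m_comm)
  next
    fix k assume "k \<in> {2..n}"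
    then show "xbd (xprod H G) k \<in> hom (xgrp (xprod H G) k) (xgrp (xprod H G) (k - 1))"
      unfolding bd using rxc_bd_hom[OF H] rxc_bd_hom[OF G] by (simp add: hom_DirProd_map)
  next
    fix k x assume "k \<in> {2..n}" "x \<in> carrier (xgrp (xprod H G) 1)"
    then show "xact (xprod H G) k x \<in> hom (xgrp (xprod H G) k) (xgrp (xprod H G) k)"
      using rxc_act_hom[OF H] rxc_act_hom[OF G] by (auto simp: act hom_DirProd_map)
  next
    fix x c assume "x \<in> carrier (xgrp (xprod H G) 1)" "c \<in> carrier (xgrp (xprod H G) 2)"
    then show "xbd (xprod H G) 2 (xact (xprod H G) 2 x c) =
       x \<otimes>\<^bsub>xgrp (xprod H G) 1\<^esub> xbd (xprod H G) 2 c \<otimes>\<^bsub>xgrp (xprod H G) 1\<^esub> inv\<^bsub>xgrp (xprod H G) 1\<^esub> x"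
      using grp[of 1] n rxc_bd2_act[OF H] rxc_bd2_act[OF G] by (auto simp: inv_DirProd)
  next
    fix c c' assume "c \<in> carrier (xgrp (xprod H G) 2)" "c' \<in> carrier (xgrp (xprod H G) 2)"
    then show "xact (xprod H G) 2 (xbd (xprod H G) 2 c) c' =
       c \<otimes>\<^bsub>xgrp (xprod H G) 2\<^esub> c' \<otimes>\<^bsub>xgrp (xprod H G) 2\<^esub> inv\<^bsub>xgrp (xprod H G) 2\<^esub> c"
      using grp[of 2] n rxc_peiffer[OF H] rxc_peiffer[OF G] by (auto simp: inv_DirProd)
  qed (use rxc_act_one[OF H] rxc_act_one[OF G] rxc_act_mult[OF H] rxc_act_mult[OF G]
      rxc_bd_act[OF H] rxc_bd_act[OF G] rxc_bd_bd[OF H] rxc_bd_bd[OF G]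
      rxc_act_bd2[OF H] rxc_act_bd2[OF G] in auto)
qed

lemma xmor_npair:
  assumes p: "xmor n Q H p" and f: "xmor n Q G f"
  shows "xmor n Q (xprod H G) (npair p f)"
  using xmor_hom[OF p] xmor_hom[OF f] xmor_bd[OF p] xmor_bd[OF f] xmor_act[OF p] xmor_act[OF f]
  by (auto simp: xmor_def npair_def hom_def Pi_iff)

section \<open>The \<open>n\<close>-pushout\<close>

lemma carrier_lift_monoid: "carrier (lift_monoid \<phi> \<psi> M) = \<phi> ` carrier M"
  by (simp add: lift_monoid_def)
lemma mult_lift_monoid: "x \<otimes>\<^bsub>lift_monoid \<phi> \<psi> M\<^esub> y = \<phi> (\<psi> x \<otimes>\<^bsub>M\<^esub> \<psi> y)"
  by (simp add: lift_monoid_def)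
lemma one_lift_monoid: "\<one>\<^bsub>lift_monoid \<phi> \<psi> M\<^esub> = \<phi> \<one>\<^bsub>M\<^esub>"
  by (simp add: lift_monoid_def)
lemma lift_monoid_update:
  "lift_monoid \<phi> \<psi> (M\<lparr>carrier := A\<rparr>) = (lift_monoid \<phi> \<psi> M)\<lparr>carrier := \<phi> ` A\<rparr>"
  by (simp add: lift_monoid_def)

lemma group_lift_monoid:
  assumes M: "group M" and inv: "\<And>x. \<psi> (\<phi> x) = x"
  shows "group (lift_monoid \<phi> \<psi> M)"
proof -
  interpret M: group M by fact
  show ?thesis
  proof (rule groupI)
    fix x assume "x \<in> carrier (lift_monoid \<phi> \<psi> M)"
    then obtain a where a: "a \<in> carrier M" "x = \<phi> a" by (auto simp: carrier_lift_monoid)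
    then have "\<phi> (inv\<^bsub>M\<^esub> a) \<otimes>\<^bsub>lift_monoid \<phi> \<psi> M\<^esub> x = \<one>\<^bsub>lift_monoid \<phi> \<psi> M\<^esub>"
      by (simp add: mult_lift_monoid one_lift_monoid inv)
    then show "\<exists>y\<in>carrier (lift_monoid \<phi> \<psi> M). y \<otimes>\<^bsub>lift_monoid \<phi> \<psi> M\<^esub> x = \<one>\<^bsub>lift_monoid \<phi> \<psi> M\<^esub>"
      using a by (auto simp: carrier_lift_monoid)
  qed (auto simp: carrier_lift_monoid mult_lift_monoid one_lift_monoid inv M.m_assoc)
qed

lemma iso_lift_monoid:
  assumes inv: "\<And>x. \<psi> (\<phi> x) = x"
  shows "\<phi> \<in> iso M (lift_monoid \<phi> \<psi> M)"
  using inv by (auto simp: iso_def bij_betw_def hom_def carrier_lift_monoid mult_lift_monoid inj_on_def)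
    (metis inv)

locale n_pushout =
  fixes n :: nat and Q :: "'q xcx" and K :: "'k xcx" and nab :: "nat \<Rightarrow> 'q \<Rightarrow> 'k"
  assumes n3: "3 \<le> n" and Q: "rxc n Q" and K: "rxc n K" and nab: "xmor n Q K nab"
begin

abbreviation "Qpen \<equiv> xgrp Q (n - Suc 0)"
abbreviation "Kn \<equiv> xgrp K n"
abbreviation "SDP \<equiv> po_sd n Q K nab"
abbreviation "Rel \<equiv> po_N n Q K nab"
abbreviation "Qlow \<equiv> xgrp Q (n - 2)"
abbreviation "Pmid \<equiv> po_P n Q K nab"
abbreviation "PO \<equiv> pushout n Q K nab"

lemma group_Qpen: "group Qpen" using rxc_group[OF Q, of "n - Suc 0"] n3 by simp
lemma group_Qn: "group (xgrp Q n)" using rxc_group[OF Q, of n] n3 by simp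
lemma comm_group_Kn: "comm_group Kn" using rxc_comm_group[OF K, of n] n3 by simp
lemma group_Qlow: "group Qlow" using rxc_group[OF Q, of "n - 2"] n3 by simp

lemma xbd_Qpen_group_hom: "group_hom Qpen Qlow (xbd Q (n - Suc 0))"
  using rxc_bd_group_hom[OF Q, of "n - Suc 0"] n3 by (simp add: numeral_2_eq_2)

lemma bd_Qn_closed: "x \<in> carrier (xgrp Q n) \<Longrightarrow> xbd Q n x \<in> carrier Qpen"
  using rxc_bd_hom[OF Q, of n] n3 by (auto simp: hom_def)
lemma nab_n_closed: "x \<in> carrier (xgrp Q n) \<Longrightarrow> nab n x \<in> carrier Kn"
  using xmor_hom[OF nab, of n] n3 by (auto simp: hom_def)

lemma cycle_grp_Qpen: "carrier (cycle_grp Q (n - Suc 0)) = kernel Qpen Qlow (xbd Q (n - Suc 0))"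
proof -
  have "n - Suc 0 \<noteq> 1" "n - Suc 0 - 1 = n - 2" using n3 by auto
  then show ?thesis by (simp add: carrier_cycle_grp)
qed

lemma boundaries_pen: "boundaries C (n - Suc 0) = xbd C n ` carrier (xgrp C n)"
  using n3 by (simp add: boundaries_def)

definition twist :: "'q \<Rightarrow> 'k \<Rightarrow> 'k" where
  "twist a m = (if n = 3 then xact K n (nab 1 (xbd Q (n - Suc 0) (inv\<^bsub>Qpen\<^esub> a))) m else m)"

lemma twist_3: "n = 3 \<Longrightarrow> twist a m = xact K 3 (nab (Suc 0) (xbd Q 2 (inv\<^bsub>xgrp Q 2\<^esub> a))) m"
  unfolding twist_def by simp

lemma sdp_mult: "(a, m) \<otimes>\<^bsub>SDP\<^esub> (a', m') = (a \<otimes>\<^bsub>Qpen\<^esub> a', twist a' m \<otimes>\<^bsub>Kn\<^esub> m')"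
  by (simp add: po_sd_def twist_def)
lemma sdp_carrier: "carrier SDP = carrier Qpen \<times> carrier Kn"
  by (simp add: po_sd_def)
lemma sdp_one: "\<one>\<^bsub>SDP\<^esub> = (\<one>\<^bsub>Qpen\<^esub>, \<one>\<^bsub>Kn\<^esub>)"
  by (simp add: po_sd_def)

lemma group_homs_at_3:
  assumes "n = 3"
  shows "group_hom (xgrp Q 2) (xgrp Q (Suc 0)) (xbd Q 2)"
    and "group_hom (xgrp Q (Suc 0)) (xgrp K (Suc 0)) (nab (Suc 0))"
  using rxc_bd_group_hom[OF Q, of 2] xmor_group_hom[OF Q K nab, of 1] assms by auto

lemma twist_hom: "a \<in> carrier Qpen \<Longrightarrow> twist a \<in> hom Kn Kn"
proof (cases "n = 3")
  case True
  interpret d: group_hom "xgrp Q 2" "xgrp Q (Suc 0)" "xbd Q 2" using group_homs_at_3 True by simp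
  interpret h: group_hom "xgrp Q (Suc 0)" "xgrp K (Suc 0)" "nab (Suc 0)" using group_homs_at_3 True by simp
  assume "a \<in> carrier Qpen"
  then show ?thesis unfolding twist_def using rxc_act_hom[OF K, of 3] True by (simp add: fun_eq_iff)
qed (simp add: twist_def hom_def)

lemma twist_twist:
  assumes a: "a \<in> carrier Qpen" and a': "a' \<in> carrier Qpen" and m: "m \<in> carrier Kn"
  shows "twist a' (twist a m) = twist (a \<otimes>\<^bsub>Qpen\<^esub> a') m"
proof (cases "n = 3")
  case True
  interpret d: group_hom "xgrp Q 2" "xgrp Q (Suc 0)" "xbd Q 2" using group_homs_at_3 True by simp
  interpret h: group_hom "xgrp Q (Suc 0)" "xgrp K (Suc 0)" "nab (Suc 0)" using group_homs_at_3 True by simp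
  show ?thesis unfolding twist_def using a a' m rxc_act_mult[OF K, of 3] True by (simp add: d.G.inv_mult_group)
qed (simp add: twist_def)

lemma twist_ker:
  assumes a: "a \<in> carrier Qpen" "xbd Q (n - Suc 0) a = \<one>\<^bsub>Qlow\<^esub>" and m: "m \<in> carrier Kn"
  shows "twist a m = m"
proof (cases "n = 3")
  case True
  interpret d: group_hom "xgrp Q 2" "xgrp Q (Suc 0)" "xbd Q 2" using group_homs_at_3 True by simp
  interpret h: group_hom "xgrp Q (Suc 0)" "xgrp K (Suc 0)" "nab (Suc 0)" using group_homs_at_3 True by simp
  show ?thesis unfolding twist_def using a m rxc_act_one[OF K, of 3] True by (simp add: d.hom_inv)
qed (simp add: twist_def)

lemma twist_closed: "a \<in> carrier Qpen \<Longrightarrow> m \<in> carrier Kn \<Longrightarrow> twist a m \<in> carrier Kn"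
  using twist_hom by (auto simp: hom_def)
lemma twist_mult: "a \<in> carrier Qpen \<Longrightarrow> m \<in> carrier Kn \<Longrightarrow> m' \<in> carrier Kn \<Longrightarrow>
   twist a (m \<otimes>\<^bsub>Kn\<^esub> m') = twist a m \<otimes>\<^bsub>Kn\<^esub> twist a m'"
  using twist_hom by (auto simp: hom_def)
lemma twist_one_left: "m \<in> carrier Kn \<Longrightarrow> twist \<one>\<^bsub>Qpen\<^esub> m = m"
proof -
  interpret d: group_hom Qpen Qlow "xbd Q (n - Suc 0)" by (rule xbd_Qpen_group_hom)
  show "m \<in> carrier Kn \<Longrightarrow> twist \<one>\<^bsub>Qpen\<^esub> m = m" by (simp add: twist_ker)
qed
lemma twist_one_right: "a \<in> carrier Qpen \<Longrightarrow> twist a \<one>\<^bsub>Kn\<^esub> = \<one>\<^bsub>Kn\<^esub>"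
  using twist_hom comm_group_Kn by (simp add: group_hom.hom_one group_hom_def group_hom_axioms_def comm_group.axioms(2))

lemma group_SDP: "group SDP"
proof -
  interpret Qpen: group Qpen by (rule group_Qpen)
  interpret Kn: comm_group Kn by (rule comm_group_Kn)
  show ?thesis
  proof (rule groupI)
    fix x assume "x \<in> carrier SDP"
    then obtain a m where am: "x = (a, m)" "a \<in> carrier Qpen" "m \<in> carrier Kn" by (auto simp: sdp_carrier)
    let ?y = "(inv\<^bsub>Qpen\<^esub> a, twist (inv\<^bsub>Qpen\<^esub> a) (inv\<^bsub>Kn\<^esub> m))"
    have "?y \<otimes>\<^bsub>SDP\<^esub> x = \<one>\<^bsub>SDP\<^esub>"
      using am twist_twist[of "inv\<^bsub>Qpen\<^esub> a" a "inv\<^bsub>Kn\<^esub> m"] by (simp add: sdp_mult sdp_one twist_one_left)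
    moreover have "?y \<in> carrier SDP" using am by (simp add: sdp_carrier twist_closed)
    ultimately show "\<exists>y\<in>carrier SDP. y \<otimes>\<^bsub>SDP\<^esub> x = \<one>\<^bsub>SDP\<^esub>" by blast
  qed (auto simp: sdp_mult sdp_carrier sdp_one twist_closed twist_mult twist_twist twist_one_right
      Qpen.m_assoc Kn.m_assoc)
qed

definition rel_gen :: "'q \<Rightarrow> 'q \<times> 'k" where
  "rel_gen x = (inv\<^bsub>Qpen\<^esub> (xbd Q n x), nab n x)"

lemma Rel_eq: "Rel = rel_gen ` carrier (xgrp Q n)"
  by (simp add: po_N_def rel_gen_def)

lemma bd_Qn_ker:
  "x \<in> carrier (xgrp Q n) \<Longrightarrow> xbd Q (n - Suc 0) (xbd Q n x) = \<one>\<^bsub>Qlow\<^esub>"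
  using rxc_bd_bd[OF Q, of n x] n3 by simp

lemma bd_Qn_inv_ker:
  assumes x: "x \<in> carrier (xgrp Q n)"
  shows "xbd Q (n - Suc 0) (inv\<^bsub>Qpen\<^esub> xbd Q n x) = \<one>\<^bsub>Qlow\<^esub>"
proof -
  interpret d: group_hom Qpen Qlow "xbd Q (n - Suc 0)" by (rule xbd_Qpen_group_hom)
  show ?thesis using bd_Qn_closed[OF x] bd_Qn_ker[OF x] by (simp add: d.hom_inv)
qed

lemma rel_gen_hom: "rel_gen \<in> hom (xgrp Q n) SDP"
proof (rule homI)
  interpret Qpen: group Qpen by (rule group_Qpen)
  fix x assume "x \<in> carrier (xgrp Q n)"
  then show "rel_gen x \<in> carrier SDP" using bd_Qn_closed nab_n_closed by (simp add: rel_gen_def sdp_carrier)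
next
  interpret Qpen: group Qpen by (rule group_Qpen)
  interpret d: group_hom "xgrp Q n" Qpen "xbd Q n" using rxc_bd_group_hom[OF Q, of n] n3 by simp
  interpret h: group_hom "xgrp Q n" Kn "nab n" using xmor_group_hom[OF Q K nab, of n] n3 by simp
  fix x y assume x: "x \<in> carrier (xgrp Q n)" and y: "y \<in> carrier (xgrp Q n)"
  have "inv\<^bsub>Qpen\<^esub> (xbd Q n (x \<otimes>\<^bsub>xgrp Q n\<^esub> y)) = inv\<^bsub>Qpen\<^esub> (xbd Q n y \<otimes>\<^bsub>Qpen\<^esub> xbd Q n x)"
    using rxc_bd_central[OF Q _ _ x, of "xbd Q n y"] x y n3 by simp
  then show "rel_gen (x \<otimes>\<^bsub>xgrp Q n\<^esub> y) = rel_gen x \<otimes>\<^bsub>SDP\<^esub> rel_gen y"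
    using x y by (simp add: rel_gen_def sdp_mult twist_ker bd_Qn_inv_ker Qpen.inv_mult_group)
qed

lemma subgroup_Rel: "subgroup Rel SDP"
proof -
  interpret group_hom "xgrp Q n" SDP rel_gen
    using group_Qn group_SDP rel_gen_hom by (simp add: group_hom_def group_hom_axioms_def)
  show ?thesis unfolding Rel_eq by (rule img_is_subgroup)
qed

text \<open>For \<open>n = 3\<close> the relations are normal because conjugating \<open>rel_gen x\<close> by \<open>(a, m)\<close> gives
  \<open>rel_gen (\<partial>a \<cdot> x)\<close>: the Peiffer identity on the first component, equivariance of \<open>\<nabla>\<close> on the
  second.\<close>
lemma rel_gen_conj_3:
  assumes n: "n = 3" and a: "a \<in> carrier (xgrp Q 2)" and m: "m \<in> carrier (xgrp K 3)"
    and x: "x \<in> carrier (xgrp Q 3)"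
  shows "(a, m) \<otimes>\<^bsub>SDP\<^esub> rel_gen x = rel_gen (xact Q 3 (xbd Q 2 a) x) \<otimes>\<^bsub>SDP\<^esub> (a, m)"
proof -
  interpret Q2: group "xgrp Q 2" using rxc_group[OF Q, of 2] n by simp
  interpret K3: comm_group "xgrp K 3" using comm_group_Kn n by simp
  interpret d: group_hom "xgrp Q 2" "xgrp Q (Suc 0)" "xbd Q 2" using group_homs_at_3 n by simp
  interpret h: group_hom "xgrp Q (Suc 0)" "xgrp K (Suc 0)" "nab (Suc 0)" using group_homs_at_3 n by simp
  let ?x' = "xact Q 3 (xbd Q 2 a) x"
  have da: "xbd Q 2 a \<in> carrier (xgrp Q 1)" using a by simp
  have dx: "xbd Q 3 x \<in> carrier (xgrp Q 2)" and nx: "nab 3 x \<in> carrier (xgrp K 3)"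
    using bd_Qn_closed nab_n_closed x n by auto
  have "xbd Q 3 ?x' = a \<otimes>\<^bsub>xgrp Q 2\<^esub> xbd Q 3 x \<otimes>\<^bsub>xgrp Q 2\<^esub> inv\<^bsub>xgrp Q 2\<^esub> a"
    using rxc_bd_act[OF Q, of 3 "xbd Q 2 a" x] rxc_peiffer[OF Q a dx] da x n by simp
  then have fst_eq: "inv\<^bsub>xgrp Q 2\<^esub> (xbd Q 3 ?x') \<otimes>\<^bsub>xgrp Q 2\<^esub> a = a \<otimes>\<^bsub>xgrp Q 2\<^esub> inv\<^bsub>xgrp Q 2\<^esub> (xbd Q 3 x)"
    using a dx by (simp add: Q2.inv_mult_group Q2.m_assoc)
  have "twist a (nab 3 ?x') =
      xact K 3 (nab (Suc 0) (xbd Q 2 (inv\<^bsub>xgrp Q 2\<^esub> a))) (xact K 3 (nab (Suc 0) (xbd Q 2 a)) (nab 3 x))"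
    using xmor_act[OF nab, of 3 "xbd Q 2 a" x] da x n3 by (simp add: twist_3[OF n])
  also have "\<dots> = xact K 3 (nab (Suc 0) (xbd Q 2 (inv\<^bsub>xgrp Q 2\<^esub> a)) \<otimes>\<^bsub>xgrp K (Suc 0)\<^esub> nab (Suc 0) (xbd Q 2 a)) (nab 3 x)"
    by (rule rxc_act_mult[OF K, symmetric, unfolded One_nat_def]) (use a nx n3 in simp_all)
  also have "\<dots> = nab 3 x"
    using a nx rxc_act_one[OF K, of 3] n3 by (simp flip: h.hom_mult d.hom_mult)
  finally have snd_eq: "twist a (nab 3 ?x') = nab 3 x" .
  have xn: "x \<in> carrier (xgrp Q n)" "m \<in> carrier Kn" using x m n by simp_all
  have "twist (inv\<^bsub>Qpen\<^esub> (xbd Q n x)) m = m"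
    by (rule twist_ker[OF group.inv_closed[OF group_Qpen bd_Qn_closed[OF xn(1)]] bd_Qn_inv_ker xn(2)])
      (rule xn(1))
  then show ?thesis unfolding rel_gen_def sdp_mult using fst_eq snd_eq m nx n by (simp add: K3.m_comm)
qed

lemma normal_Rel: "Rel \<lhd> SDP"
proof (cases "n = 3")
  case False
  interpret Qpen: comm_group Qpen using rxc_comm_group[OF Q, of "n - Suc 0"] n3 False by simp
  interpret Kn: comm_group Kn by (rule comm_group_Kn)
  have "comm_group SDP"
    by (rule group.group_comm_groupI[OF group_SDP])
       (use False in \<open>auto simp: sdp_mult sdp_carrier twist_def Qpen.m_comm Kn.m_comm\<close>)
  then show ?thesis using comm_group.subgroup_imp_normal subgroup_Rel by blast
next
  case True
  interpret SDP: group SDP by (rule group_SDP)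
  show ?thesis unfolding SDP.normal_inv_iff
  proof (intro conjI ballI subgroup_Rel)
    fix u r assume u: "u \<in> carrier SDP" and "r \<in> Rel"
    then obtain x where x: "x \<in> carrier (xgrp Q n)" "r = rel_gen x" by (auto simp: Rel_eq)
    obtain a m where "u = (a, m)" "a \<in> carrier Qpen" "m \<in> carrier Kn"
      using u by (auto simp: sdp_carrier)
    then have am: "u = (a, m)" "a \<in> carrier (xgrp Q 2)" "m \<in> carrier (xgrp K 3)" using True by simp_all
    let ?x' = "xact Q 3 (xbd Q 2 a) x"
    have x': "?x' \<in> carrier (xgrp Q n)"
      using rxc_act_hom[OF Q, of 3 "xbd Q 2 a"] rxc_bd_hom[OF Q, of 2] am x True by (auto simp: hom_def)
    have "u \<otimes>\<^bsub>SDP\<^esub> r = rel_gen ?x' \<otimes>\<^bsub>SDP\<^esub> u"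
      using rel_gen_conj_3[OF True am(2,3)] x True am by simp
    moreover have "r \<in> carrier SDP" "rel_gen ?x' \<in> carrier SDP"
      using x x' rel_gen_hom by (auto simp: hom_def)
    ultimately have "u \<otimes>\<^bsub>SDP\<^esub> r \<otimes>\<^bsub>SDP\<^esub> inv\<^bsub>SDP\<^esub> u = rel_gen ?x'"
      using u by (simp add: SDP.m_assoc)
    then show "u \<otimes>\<^bsub>SDP\<^esub> r \<otimes>\<^bsub>SDP\<^esub> inv\<^bsub>SDP\<^esub> u \<in> Rel" using x' by (simp add: Rel_eq)
  qed
qed

lemma group_Pmid: "group Pmid"
  unfolding po_P_def using normal_Rel by (rule normal.factorgroup_is_group)

lemma degrees_distinct: "\<not> n - Suc 0 \<le> n - 2" "n \<noteq> n - Suc 0" "\<not> n \<le> n - 2"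
  using n3 by auto

lemma xgrp_pushout_low: "k \<le> n - 2 \<Longrightarrow> xgrp PO k = lift_monoid PLow lowv (xgrp Q k)"
  by (simp add: pushout_def)
lemma xgrp_pushout_mid: "xgrp PO (n - Suc 0) = lift_monoid PMid midv Pmid"
  using degrees_distinct by (simp add: pushout_def)
lemma xgrp_pushout_top: "xgrp PO n = lift_monoid PTop topv Kn"
  using degrees_distinct by (simp add: pushout_def)
lemma xbd_pushout_low: "k \<le> n - 2 \<Longrightarrow> xbd PO k x = PLow (xbd Q k (lowv x))"
  by (simp add: pushout_def)
lemma xbd_pushout_mid: "xbd PO (n - Suc 0) x = PLow (xbd Q (n - Suc 0) (fst (SOME p. p \<in> midv x)))"
  using degrees_distinct by (simp add: pushout_def)
lemma xbd_pushout_top: "xbd PO n x = PMid (Rel #>\<^bsub>SDP\<^esub> (\<one>\<^bsub>Qpen\<^esub>, topv x))"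
  using degrees_distinct by (simp add: pushout_def)
lemma xact_pushout_low: "k \<le> n - 2 \<Longrightarrow> xact PO k x c = PLow (xact Q k (lowv x) (lowv c))"
  by (simp add: pushout_def)
lemma xact_pushout_mid: "xact PO (n - Suc 0) x c =
   PMid ((\<lambda>(a, m). (xact Q (n - Suc 0) (lowv x) a, xact K n (nab (Suc 0) (lowv x)) m)) ` midv c)"
  using degrees_distinct by (simp add: pushout_def)
lemma xact_pushout_top: "xact PO n x c = PTop (xact K n (nab (Suc 0) (lowv x)) (topv c))"
  using degrees_distinct by (simp add: pushout_def)

lemma carrier_pushout_low: "k \<le> n - 2 \<Longrightarrow> carrier (xgrp PO k) = PLow ` carrier (xgrp Q k)"
  by (simp add: xgrp_pushout_low carrier_lift_monoid)
lemma carrier_pushout_mid: "carrier (xgrp PO (n - Suc 0)) = PMid ` carrier Pmid"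
  by (simp add: xgrp_pushout_mid carrier_lift_monoid)
lemma carrier_pushout_top: "carrier (xgrp PO n) = PTop ` carrier Kn"
  by (simp add: xgrp_pushout_top carrier_lift_monoid)
lemma mult_pushout_low: "k \<le> n - 2 \<Longrightarrow> PLow x \<otimes>\<^bsub>xgrp PO k\<^esub> PLow y = PLow (x \<otimes>\<^bsub>xgrp Q k\<^esub> y)"
  by (simp add: xgrp_pushout_low mult_lift_monoid)
lemma mult_pushout_mid: "PMid X \<otimes>\<^bsub>xgrp PO (n - Suc 0)\<^esub> PMid Y = PMid (X <#>\<^bsub>SDP\<^esub> Y)"
  by (simp add: xgrp_pushout_mid mult_lift_monoid po_P_def)
lemma mult_pushout_top: "PTop x \<otimes>\<^bsub>xgrp PO n\<^esub> PTop y = PTop (x \<otimes>\<^bsub>Kn\<^esub> y)"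
  by (simp add: xgrp_pushout_top mult_lift_monoid)
lemma one_pushout_mid: "\<one>\<^bsub>xgrp PO (n - Suc 0)\<^esub> = PMid Rel"
  by (simp add: xgrp_pushout_mid one_lift_monoid po_P_def)

lemma rcos_sum_Rel: "u \<in> carrier SDP \<Longrightarrow> v \<in> carrier SDP \<Longrightarrow>
  (Rel #>\<^bsub>SDP\<^esub> u) <#>\<^bsub>SDP\<^esub> (Rel #>\<^bsub>SDP\<^esub> v) = Rel #>\<^bsub>SDP\<^esub> (u \<otimes>\<^bsub>SDP\<^esub> v)"
  using normal.rcos_sum[OF normal_Rel] by simp

lemma rcos_Rel_in_pushout_mid: "u \<in> carrier SDP \<Longrightarrow> PMid (Rel #>\<^bsub>SDP\<^esub> u) \<in> carrier (xgrp PO (n - Suc 0))"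
  using group.rcosetsI[OF group_SDP] subgroup.subset[OF subgroup_Rel]
  by (simp add: carrier_pushout_mid po_P_def FactGroup_def)

lemma pushout_mid_cases:
  assumes "X \<in> carrier (xgrp PO (n - Suc 0))"
  obtains u where "u \<in> carrier SDP" "X = PMid (Rel #>\<^bsub>SDP\<^esub> u)"
  using assms by (auto simp: carrier_pushout_mid po_P_def FactGroup_def RCOSETS_def)

lemma group_pushout:
  assumes k: "1 \<le> k" "k \<le> n"
  shows "group (xgrp PO k)"
proof -
  consider "k \<le> n - 2" | "k = n - Suc 0" | "k = n" using k by linarith
  then show ?thesis
  proof cases
    case 1
    then show ?thesis using rxc_group[OF Q k] by (auto simp: xgrp_pushout_low intro!: group_lift_monoid)
  next
    case 2
    then show ?thesis using group_Pmid by (auto simp: xgrp_pushout_mid intro!: group_lift_monoid)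
  next
    case 3
    then show ?thesis using comm_group_Kn
      by (auto simp: xgrp_pushout_top comm_group.axioms(2) intro!: group_lift_monoid)
  qed
qed

definition sdp_bd :: "'q \<times> 'k \<Rightarrow> 'q" where
  "sdp_bd u = xbd Q (n - Suc 0) (fst u)"

lemma sdp_bd_hom: "sdp_bd \<in> hom SDP Qlow"
  using group_hom.homh[OF xbd_Qpen_group_hom] by (auto simp: hom_def sdp_bd_def sdp_carrier sdp_mult)

lemma sdp_bd_Rel: "r \<in> Rel \<Longrightarrow> sdp_bd r = \<one>\<^bsub>Qlow\<^esub>"
  using bd_Qn_inv_ker by (auto simp: Rel_eq sdp_bd_def rel_gen_def)

lemma xbd_pushout_rcos: "u \<in> carrier SDP \<Longrightarrow> xbd PO (n - Suc 0) (PMid (Rel #>\<^bsub>SDP\<^esub> u)) = PLow (sdp_bd u)"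
  using normal.hom_some_rcos[OF normal_Rel sdp_bd_hom group_Qlow sdp_bd_Rel]
  by (simp add: xbd_pushout_mid sdp_bd_def)

lemma cycle_grp_pushout_low:
  assumes k: "1 \<le> k" "k \<le> n - 2"
  shows "cycle_grp PO k = lift_monoid PLow lowv (cycle_grp Q k)"
proof (cases "k = 1")
  case False
  have "\<one>\<^bsub>xgrp PO (k-1)\<^esub> = PLow \<one>\<^bsub>xgrp Q (k-1)\<^esub>"
    using k by (simp add: xgrp_pushout_low one_lift_monoid)
  then have "kernel (xgrp PO k) (xgrp PO (k-1)) (xbd PO k) = PLow ` kernel (xgrp Q k) (xgrp Q (k-1)) (xbd Q k)"
    using k by (auto simp: kernel_def carrier_pushout_low xbd_pushout_low)
  then show ?thesis using k False by (simp add: cycle_grp_def xgrp_pushout_low lift_monoid_update)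
qed (use k in \<open>simp add: cycle_grp_def xgrp_pushout_low\<close>)

text \<open>The boundary of \<open>[a, m]\<close> is \<open>\<xi>(a)\<close>, so in degree \<open>n - 2\<close> the pushout has the boundaries of \<open>Q\<close>.\<close>
lemma boundaries_pushout_low:
  assumes k: "1 \<le> k" "k \<le> n - 2"
  shows "boundaries PO k = PLow ` boundaries Q k"
proof (cases "k + 1 \<le> n - 2")
  case True
  then show ?thesis by (simp add: boundaries_def carrier_pushout_low xbd_pushout_low image_image)
next
  case False
  then have k1: "k + 1 = n - Suc 0" using k by simp
  interpret Kn: comm_group Kn by (rule comm_group_Kn)
  have "xbd PO (n - Suc 0) ` carrier (xgrp PO (n - Suc 0)) = PLow ` xbd Q (n - Suc 0) ` carrier Qpen"
  proof (intro equalityI subsetI)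
    fix z assume "z \<in> xbd PO (n - Suc 0) ` carrier (xgrp PO (n - Suc 0))"
    then obtain X where "X \<in> carrier (xgrp PO (n - Suc 0))" "z = xbd PO (n - Suc 0) X" by blast
    then show "z \<in> PLow ` xbd Q (n - Suc 0) ` carrier Qpen"
      by (elim pushout_mid_cases) (auto simp: xbd_pushout_rcos sdp_bd_def sdp_carrier)
  next
    fix z :: "('q, 'k) po" assume "z \<in> PLow ` xbd Q (n - Suc 0) ` carrier Qpen"
    then obtain a where a: "a \<in> carrier Qpen" "z = PLow (xbd Q (n - Suc 0) a)" by blast
    then have "(a, \<one>\<^bsub>Kn\<^esub>) \<in> carrier SDP" by (simp add: sdp_carrier)
    then show "z \<in> xbd PO (n - Suc 0) ` carrier (xgrp PO (n - Suc 0))"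
      using a rcos_Rel_in_pushout_mid by (force simp: xbd_pushout_rcos sdp_bd_def)
  qed
  then show ?thesis unfolding boundaries_def k1 .
qed

lemma pushout_low_cycle_grp:
  assumes k: "1 \<le> k" "k \<le> n - 2"
  shows "group (cycle_grp PO k)" and "boundaries PO k \<lhd> cycle_grp PO k"
proof -
  have kn: "k < n" using k n3 by simp
  have Z: "group (cycle_grp Q k)" and B: "boundaries Q k \<lhd> cycle_grp Q k" using rxc_cycle_grp[OF Q k(1) kn] by auto
  have Z': "group (lift_monoid PLow lowv (cycle_grp Q k))" using Z by (auto intro!: group_lift_monoid)
  show "group (cycle_grp PO k)" using Z' cycle_grp_pushout_low[OF k] by simp
  show "boundaries PO k \<lhd> cycle_grp PO k"
    using iso_normal_subgroup[OF iso_lift_monoid Z Z' B] cycle_grp_pushout_low[OF k] boundaries_pushout_low[OF k]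
    by simp
qed

lemma xbd_pushout_mid_hom: "xbd PO (n - Suc 0) \<in> hom (xgrp PO (n - Suc 0)) (xgrp PO (n - 2))"
proof (rule homI)
  fix X assume "X \<in> carrier (xgrp PO (n - Suc 0))"
  then show "xbd PO (n - Suc 0) X \<in> carrier (xgrp PO (n - 2))"
    using sdp_bd_hom by (elim pushout_mid_cases) (auto simp: xbd_pushout_rcos xgrp_pushout_low carrier_lift_monoid hom_def)
next
  fix X Y assume "X \<in> carrier (xgrp PO (n - Suc 0))" "Y \<in> carrier (xgrp PO (n - Suc 0))"
  then obtain u v where "u \<in> carrier SDP" "X = PMid (Rel #>\<^bsub>SDP\<^esub> u)" "v \<in> carrier SDP"
    "Y = PMid (Rel #>\<^bsub>SDP\<^esub> v)" by (metis pushout_mid_cases)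
  then show "xbd PO (n - Suc 0) (X \<otimes>\<^bsub>xgrp PO (n - Suc 0)\<^esub> Y) =
      xbd PO (n - Suc 0) X \<otimes>\<^bsub>xgrp PO (n - 2)\<^esub> xbd PO (n - Suc 0) Y"
    using sdp_bd_hom group.subgroup_self[OF group_SDP]
    by (simp add: mult_pushout_mid rcos_sum_Rel xbd_pushout_rcos hom_mult subgroup.m_closed
        xgrp_pushout_low mult_lift_monoid)
qed

lemma xbd_pushout_top_hom: "xbd PO n \<in> hom (xgrp PO n) (xgrp PO (n - Suc 0))"
proof (rule homI)
  interpret Qpen: group Qpen by (rule group_Qpen)
  fix X assume "X \<in> carrier (xgrp PO n)"
  then show "xbd PO n X \<in> carrier (xgrp PO (n - Suc 0))"
    using rcos_Rel_in_pushout_mid by (auto simp: carrier_pushout_top xbd_pushout_top sdp_carrier)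
next
  interpret Qpen: group Qpen by (rule group_Qpen)
  interpret Kn: comm_group Kn by (rule comm_group_Kn)
  fix X Y assume "X \<in> carrier (xgrp PO n)" "Y \<in> carrier (xgrp PO n)"
  then obtain m m' where m: "m \<in> carrier Kn" "X = PTop m" "m' \<in> carrier Kn" "Y = PTop m'"
    by (auto simp: carrier_pushout_top)
  then have "(\<one>\<^bsub>Qpen\<^esub>, m) \<otimes>\<^bsub>SDP\<^esub> (\<one>\<^bsub>Qpen\<^esub>, m') = (\<one>\<^bsub>Qpen\<^esub>, m \<otimes>\<^bsub>Kn\<^esub> m')"
    by (simp add: sdp_mult twist_one_left)
  then show "xbd PO n (X \<otimes>\<^bsub>xgrp PO n\<^esub> Y) = xbd PO n X \<otimes>\<^bsub>xgrp PO (n - Suc 0)\<^esub> xbd PO n Y"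
    using m by (simp add: mult_pushout_top xbd_pushout_top mult_pushout_mid rcos_sum_Rel sdp_carrier)
qed

lemma cycle_grp_pushout_mid: "cycle_grp PO (n - Suc 0) =
   (xgrp PO (n - Suc 0))\<lparr>carrier := kernel (xgrp PO (n - Suc 0)) (xgrp PO (n - 2)) (xbd PO (n - Suc 0))\<rparr>"
  using n3 by (simp add: cycle_grp_def numeral_2_eq_2)

lemma rcos_Rel_cycle_iff:
  assumes u: "u \<in> carrier SDP"
  shows "PMid (Rel #>\<^bsub>SDP\<^esub> u) \<in> carrier (cycle_grp PO (n - Suc 0)) \<longleftrightarrow> sdp_bd u = \<one>\<^bsub>Qlow\<^esub>"
  using rcos_Rel_in_pushout_mid[OF u] u
  by (auto simp: cycle_grp_pushout_mid kernel_def xbd_pushout_rcos xgrp_pushout_low one_lift_monoid)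

lemma pushout_mid_cycle_cases:
  assumes "X \<in> carrier (cycle_grp PO (n - Suc 0))"
  obtains u where "u \<in> carrier SDP" "X = PMid (Rel #>\<^bsub>SDP\<^esub> u)" "sdp_bd u = \<one>\<^bsub>Qlow\<^esub>"
proof -
  have "X \<in> carrier (xgrp PO (n - Suc 0))" using assms by (simp add: cycle_grp_pushout_mid kernel_def)
  then obtain u where u: "u \<in> carrier SDP" "X = PMid (Rel #>\<^bsub>SDP\<^esub> u)" by (rule pushout_mid_cases)
  then show ?thesis using rcos_Rel_cycle_iff assms that by blast
qed

lemma boundaries_pushout_mid:
  "boundaries PO (n - Suc 0) = (\<lambda>m. PMid (Rel #>\<^bsub>SDP\<^esub> (\<one>\<^bsub>Qpen\<^esub>, m))) ` carrier Kn"
  using n3 by (simp add: boundaries_def carrier_pushout_top xbd_pushout_top image_image)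

lemma rcos_bd_in_boundaries:
  assumes x: "x \<in> carrier (xgrp Q n)" and m: "m \<in> carrier Kn"
  shows "PMid (Rel #>\<^bsub>SDP\<^esub> (xbd Q n x, m)) \<in> boundaries PO (n - Suc 0)"
proof -
  interpret Qpen: group Qpen by (rule group_Qpen)
  interpret Kn: comm_group Kn by (rule comm_group_Kn)
  interpret SDP: group SDP by (rule group_SDP)
  define m' where "m' = twist (xbd Q n x) (nab n x) \<otimes>\<^bsub>Kn\<^esub> m"
  have m': "m' \<in> carrier Kn"
    unfolding m'_def using twist_closed bd_Qn_closed nab_n_closed x m by simp
  have u: "(xbd Q n x, m) \<in> carrier SDP" using x m bd_Qn_closed by (simp add: sdp_carrier)
  \<comment> \<open>multiplying by the relation \<open>rel_gen x\<close> kills the \<open>Q\<^sub>n\<^sub>-\<^sub>1\<close>-component\<close>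
  have "rel_gen x \<otimes>\<^bsub>SDP\<^esub> (xbd Q n x, m) = (\<one>\<^bsub>Qpen\<^esub>, m')"
    using x bd_Qn_closed[OF x] by (simp add: rel_gen_def sdp_mult m'_def)
  moreover have "rel_gen x \<in> Rel" using x by (simp add: Rel_eq)
  ultimately have "(\<one>\<^bsub>Qpen\<^esub>, m') \<in> Rel #>\<^bsub>SDP\<^esub> (xbd Q n x, m)" unfolding r_coset_def by force
  then have "Rel #>\<^bsub>SDP\<^esub> (xbd Q n x, m) = Rel #>\<^bsub>SDP\<^esub> (\<one>\<^bsub>Qpen\<^esub>, m')"
    using SDP.repr_independence[OF _ u subgroup_Rel] by simp
  then show ?thesis using m' by (auto simp: boundaries_pushout_mid)
qed

lemma sdp_cycles_commute:
  assumes u: "u \<in> carrier SDP" "sdp_bd u = \<one>\<^bsub>Qlow\<^esub>" and v: "v \<in> carrier SDP" "sdp_bd v = \<one>\<^bsub>Qlow\<^esub>"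
  shows "u \<otimes>\<^bsub>SDP\<^esub> v = v \<otimes>\<^bsub>SDP\<^esub> u"
proof -
  interpret Kn: comm_group Kn by (rule comm_group_Kn)
  obtain a m b m' where "u = (a, m)" "v = (b, m')" by fastforce
  then show ?thesis
    using assms rxc_cycle_central[OF Q, of "n - Suc 0" a b] twist_ker[of a] twist_ker[of b] n3
    by (simp add: sdp_mult sdp_carrier sdp_bd_def Kn.m_comm numeral_2_eq_2)
qed

lemma pushout_mid_cycle_grp:
  "group (cycle_grp PO (n - Suc 0))" "boundaries PO (n - Suc 0) \<lhd> cycle_grp PO (n - Suc 0)"
proof -
  interpret d: group_hom "xgrp PO (n - Suc 0)" "xgrp PO (n - 2)" "xbd PO (n - Suc 0)"
    using group_pushout[of "n - Suc 0"] group_pushout[of "n - 2"] n3 xbd_pushout_mid_hom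
    by (simp add: group_hom_def group_hom_axioms_def)
  interpret e: group_hom "xgrp PO n" "xgrp PO (n - Suc 0)" "xbd PO n"
    using group_pushout[of n] group_pushout[of "n - Suc 0"] n3 xbd_pushout_top_hom
    by (simp add: group_hom_def group_hom_axioms_def)
  have Z: "subgroup (kernel (xgrp PO (n - Suc 0)) (xgrp PO (n - 2)) (xbd PO (n - Suc 0))) (xgrp PO (n - Suc 0))"
    by (rule d.subgroup_kernel)
  show group: "group (cycle_grp PO (n - Suc 0))"
    unfolding cycle_grp_pushout_mid using d.G.subgroup_imp_group[OF Z] .
  have B: "subgroup (boundaries PO (n - Suc 0)) (xgrp PO (n - Suc 0))"
    using e.img_is_subgroup n3 by (simp add: boundaries_def)
  have "boundaries PO (n - Suc 0) \<subseteq> carrier (cycle_grp PO (n - Suc 0))"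
    using rcos_Rel_cycle_iff group.is_monoid[OF group_Qpen]
    by (auto simp: boundaries_pushout_mid sdp_carrier sdp_bd_def group_hom.hom_one[OF xbd_Qpen_group_hom])
  then have BZ: "subgroup (boundaries PO (n - Suc 0)) (cycle_grp PO (n - Suc 0))"
    using d.G.subgroup_incl[OF B Z] by (simp add: cycle_grp_pushout_mid)
  have "comm_group (cycle_grp PO (n - Suc 0))"
  proof (rule group.group_comm_groupI[OF group])
    fix X Y assume "X \<in> carrier (cycle_grp PO (n - Suc 0))" "Y \<in> carrier (cycle_grp PO (n - Suc 0))"
    then show "X \<otimes>\<^bsub>cycle_grp PO (n - Suc 0)\<^esub> Y = Y \<otimes>\<^bsub>cycle_grp PO (n - Suc 0)\<^esub> X"
      by (elim pushout_mid_cycle_cases) (simp add: mult_pushout_mid rcos_sum_Rel sdp_cycles_commute)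
  qed
  then show "boundaries PO (n - Suc 0) \<lhd> cycle_grp PO (n - Suc 0)"
    using BZ by (rule comm_group.subgroup_imp_normal)
qed

end

section \<open>Projecting the \<open>n\<close>-pushout along a trivial fibration\<close>

locale tfib_pushout =
  fixes n :: nat and Q :: "'q xcx" and H :: "'h xcx" and G :: "'g xcx"
    and p :: "nat \<Rightarrow> 'q \<Rightarrow> 'h" and f :: "nat \<Rightarrow> 'q \<Rightarrow> 'g"
  assumes n_ge_3: "3 \<le> n" and rxc_Q: "rxc n Q" and H: "rxc n H" and G: "rxc n G"
    and p: "tfib n Q H p" and f: "xmor n Q G f"

lemma (in tfib_pushout) p_xmor: "xmor n Q H p"
  using p by (simp add: tfib_def fib_def)

sublocale tfib_pushout \<subseteq> n_pushout n Q "xprod H G" "npair p f"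
  using n_ge_3 rxc_Q rxc_xprod[OF H G] xmor_npair[OF p_xmor f] by unfold_locales auto

context tfib_pushout
begin

abbreviation "Hpen \<equiv> xgrp H (n - Suc 0)"
abbreviation "rho1 \<equiv> xcomp proj1 (po_rho n Q (xprod H G) (npair p f))"

lemma npair_app [simp]: "npair p f k x = (p k x, f k x)"
  by (simp add: npair_def)

lemma group_Hpen: "group Hpen" using rxc_group[OF H, of "n - Suc 0"] n3 by simp

lemma p_group_hom: "1 \<le> k \<Longrightarrow> k \<le> n \<Longrightarrow> group_hom (xgrp Q k) (xgrp H k) (p k)"
  using xmor_group_hom[OF Q H p_xmor] by simp

lemma xbd_Hn_group_hom: "group_hom (xgrp H n) Hpen (xbd H n)"
  using rxc_bd_group_hom[OF H, of n] n3 by simp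

definition sdp_rho1 :: "'q \<times> ('h \<times> 'g) \<Rightarrow> 'h" where
  "sdp_rho1 u = p (n - Suc 0) (fst u) \<otimes>\<^bsub>Hpen\<^esub> xbd H n (fst (snd u))"

lemma rho1_low: "k \<le> n - 2 \<Longrightarrow> rho1 k x = p k (lowv x)"
  by (simp add: xcomp_def proj1_def po_rho_def npair_def)
lemma rho1_mid: "rho1 (n - Suc 0) X = sdp_rho1 (SOME u. u \<in> midv X)"
  using degrees_distinct
  by (simp add: xcomp_def proj1_def po_rho_def npair_def sdp_rho1_def split: prod.split)
lemma rho1_top: "rho1 n x = fst (topv x)"
  using degrees_distinct by (simp add: xcomp_def proj1_def po_rho_def npair_def)

lemma bd_fst_twist:
  assumes a: "a \<in> carrier Qpen" and b: "b \<in> carrier (xgrp H n)"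
  shows "xbd H n (fst (twist a (b, c))) =
    inv\<^bsub>Hpen\<^esub> p (n - Suc 0) a \<otimes>\<^bsub>Hpen\<^esub> xbd H n b \<otimes>\<^bsub>Hpen\<^esub> p (n - Suc 0) a"
proof (cases "n = 3")
  case True
  interpret Q2: group "xgrp Q 2" using rxc_group[OF Q, of 2] n3 by simp
  interpret p2: group_hom "xgrp Q 2" "xgrp H 2" "p 2" using p_group_hom[of 2] n3 by simp
  have tw: "fst (twist a (b, c)) = xact H 3 (p (Suc 0) (xbd Q 2 (inv\<^bsub>xgrp Q 2\<^esub> a))) b"
    by (simp add: twist_3[OF True])
  have a2: "a \<in> carrier (xgrp Q 2)" and b3: "b \<in> carrier (xgrp H 3)" using a b True by auto
  have pa: "p 2 (inv\<^bsub>xgrp Q 2\<^esub> a) \<in> carrier (xgrp H 2)" using a2 by simp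
  have db: "xbd H 3 b \<in> carrier (xgrp H 2)" using rxc_bd_hom[OF H, of 3] b3 n3 by (auto simp: hom_def)
  have dpa: "xbd H 2 (p 2 (inv\<^bsub>xgrp Q 2\<^esub> a)) \<in> carrier (xgrp H (Suc 0))"
    using rxc_bd_hom[OF H, of 2] pa n3 by (auto simp: hom_def)
  have "xbd H 3 (xact H 3 (p (Suc 0) (xbd Q 2 (inv\<^bsub>xgrp Q 2\<^esub> a))) b) =
      xact H 2 (xbd H 2 (p 2 (inv\<^bsub>xgrp Q 2\<^esub> a))) (xbd H 3 b)"
    using xmor_bd[OF p_xmor, of 2] rxc_bd_act[OF H, of 3] dpa a2 b3 n3 by simp
  also have "\<dots> = inv\<^bsub>xgrp H 2\<^esub> p 2 a \<otimes>\<^bsub>xgrp H 2\<^esub> xbd H 3 b \<otimes>\<^bsub>xgrp H 2\<^esub> p 2 a"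
    using rxc_peiffer[OF H pa db] a2 by simp
  finally show ?thesis using tw True by simp
next
  case False
  interpret Hpen: comm_group Hpen using rxc_comm_group[OF H, of "n - Suc 0"] n3 False by simp
  interpret pm: group_hom Qpen Hpen "p (n - Suc 0)" using p_group_hom[of "n - Suc 0"] n3 by simp
  interpret dH: group_hom "xgrp H n" Hpen "xbd H n" by (rule xbd_Hn_group_hom)
  have "p (n - Suc 0) a \<in> carrier Hpen" "xbd H n b \<in> carrier Hpen" using a b by simp_all
  then show ?thesis
    using False by (simp add: twist_def Hpen.m_comm[of "inv\<^bsub>Hpen\<^esub> p (n - Suc 0) a" "xbd H n b"] Hpen.m_assoc)
qed

lemma sdp_rho1_hom: "sdp_rho1 \<in> hom SDP Hpen"
proof (rule homI)
  interpret Hpen: group Hpen by (rule group_Hpen)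
  interpret pm: group_hom Qpen Hpen "p (n - Suc 0)" using p_group_hom[of "n - Suc 0"] n3 by simp
  interpret dH: group_hom "xgrp H n" Hpen "xbd H n" by (rule xbd_Hn_group_hom)
  fix u assume "u \<in> carrier SDP"
  then show "sdp_rho1 u \<in> carrier Hpen" by (auto simp: sdp_rho1_def sdp_carrier)
next
  interpret Hpen: group Hpen by (rule group_Hpen)
  interpret pm: group_hom Qpen Hpen "p (n - Suc 0)" using p_group_hom[of "n - Suc 0"] n3 by simp
  interpret dH: group_hom "xgrp H n" Hpen "xbd H n" by (rule xbd_Hn_group_hom)
  fix u v assume "u \<in> carrier SDP" "v \<in> carrier SDP"
  then obtain a b c a' b' c' where u: "u = (a, (b, c))" "a \<in> carrier Qpen" "b \<in> carrier (xgrp H n)"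
      "c \<in> carrier (xgrp G n)" and v: "v = (a', (b', c'))" "a' \<in> carrier Qpen"
      "b' \<in> carrier (xgrp H n)" "c' \<in> carrier (xgrp G n)"
    by (auto simp: sdp_carrier)
  obtain b1 c1 where tw: "twist a' (b, c) = (b1, c1)" "b1 \<in> carrier (xgrp H n)" "c1 \<in> carrier (xgrp G n)"
    using twist_closed[of a' "(b, c)"] u v by auto
  have cancel: "p (n - Suc 0) a' \<otimes>\<^bsub>Hpen\<^esub> (inv\<^bsub>Hpen\<^esub> p (n - Suc 0) a' \<otimes>\<^bsub>Hpen\<^esub> y) = y"
    if "y \<in> carrier Hpen" for y
    using that v by (simp add: Hpen.m_assoc[symmetric])
  have "sdp_rho1 (u \<otimes>\<^bsub>SDP\<^esub> v) = p (n - Suc 0) a \<otimes>\<^bsub>Hpen\<^esub> p (n - Suc 0) a' \<otimes>\<^bsub>Hpen\<^esub>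
      (xbd H n (fst (twist a' (b, c))) \<otimes>\<^bsub>Hpen\<^esub> xbd H n b')"
    using u v tw by (simp add: sdp_rho1_def sdp_mult Hpen.m_assoc)
  also have "\<dots> = sdp_rho1 u \<otimes>\<^bsub>Hpen\<^esub> sdp_rho1 v"
    using u v bd_fst_twist[of a' b c] by (simp add: sdp_rho1_def Hpen.m_assoc cancel)
  finally show "sdp_rho1 (u \<otimes>\<^bsub>SDP\<^esub> v) = sdp_rho1 u \<otimes>\<^bsub>Hpen\<^esub> sdp_rho1 v" .
qed

lemma sdp_rho1_Rel: "r \<in> Rel \<Longrightarrow> sdp_rho1 r = \<one>\<^bsub>Hpen\<^esub>"
proof -
  interpret pm: group_hom Qpen Hpen "p (n - Suc 0)" using p_group_hom[of "n - Suc 0"] n3 by simp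
  assume "r \<in> Rel"
  then obtain x where x: "x \<in> carrier (xgrp Q n)" "r = rel_gen x" by (auto simp: Rel_eq)
  have "p (n - Suc 0) (xbd Q n x) = xbd H n (p n x)" using xmor_bd[OF p_xmor, of n x] x n3 by simp
  moreover have "p (n - Suc 0) (xbd Q n x) \<in> carrier Hpen" using bd_Qn_closed[OF x(1)] by simp
  ultimately show ?thesis using x bd_Qn_closed[OF x(1)]
    by (simp add: sdp_rho1_def rel_gen_def pm.hom_inv)
qed

lemma rho1_rcos: "u \<in> carrier SDP \<Longrightarrow> rho1 (n - Suc 0) (PMid (Rel #>\<^bsub>SDP\<^esub> u)) = sdp_rho1 u"
  using normal.hom_some_rcos[OF normal_Rel sdp_rho1_hom group_Hpen sdp_rho1_Rel] by (simp add: rho1_mid)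

lemma sdp_rho1_closed: "u \<in> carrier SDP \<Longrightarrow> sdp_rho1 u \<in> carrier Hpen"
  using sdp_rho1_hom by (auto simp: hom_def)

lemma rho1_hom:
  assumes k: "1 \<le> k" "k \<le> n"
  shows "rho1 k \<in> hom (xgrp PO k) (xgrp H k)"
proof -
  consider "k \<le> n - 2" | "k = n - Suc 0" | "k = n" using k by linarith
  then show ?thesis
  proof cases
    case 1
    then show ?thesis using group_hom.homh[OF p_group_hom[OF k]]
      by (auto simp: hom_def carrier_pushout_low rho1_low mult_pushout_low)
  next
    case 2
    have "rho1 k X \<in> carrier (xgrp H k)" if "X \<in> carrier (xgrp PO k)" for X
      using that 2 by (auto elim!: pushout_mid_cases simp: rho1_rcos sdp_rho1_closed)
    moreover have "rho1 k (X \<otimes>\<^bsub>xgrp PO k\<^esub> Y) = rho1 k X \<otimes>\<^bsub>xgrp H k\<^esub> rho1 k Y"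
      if "X \<in> carrier (xgrp PO k)" "Y \<in> carrier (xgrp PO k)" for X Y
      using that 2 group.subgroup_self[OF group_SDP] sdp_rho1_hom
      by (auto elim!: pushout_mid_cases
          simp: mult_pushout_mid rcos_sum_Rel rho1_rcos hom_mult subgroup.m_closed)
    ultimately show ?thesis by (intro homI)
  qed (auto simp: hom_def carrier_pushout_top rho1_top mult_pushout_top)
qed

lemma rho1_bd:
  assumes k: "2 \<le> k" "k \<le> n" and c: "c \<in> carrier (xgrp PO k)"
  shows "rho1 (k - 1) (xbd PO k c) = xbd H k (rho1 k c)"
proof -
  interpret Hpen: group Hpen by (rule group_Hpen)
  interpret dH: group_hom "xgrp H n" Hpen "xbd H n" by (rule xbd_Hn_group_hom)
  interpret pm: group_hom Qpen Hpen "p (n - Suc 0)" using p_group_hom[of "n - Suc 0"] n3 by simp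
  consider "k \<le> n - 2" | "k = n - Suc 0" | "k = n" using k by linarith
  then show ?thesis
  proof cases
    case 1
    then show ?thesis
      using c k xmor_bd[OF p_xmor, of k] by (auto simp: carrier_pushout_low xbd_pushout_low rho1_low)
  next
    case 2
    have "c \<in> carrier (xgrp PO (n - Suc 0))" using c 2 by simp
    then obtain u where u: "u \<in> carrier SDP" "c = PMid (Rel #>\<^bsub>SDP\<^esub> u)" by (rule pushout_mid_cases)
    then obtain a b g where abg: "a \<in> carrier Qpen" "b \<in> carrier (xgrp H n)" "g \<in> carrier (xgrp G n)"
      "c = PMid (Rel #>\<^bsub>SDP\<^esub> (a, (b, g)))"
      by (auto simp: sdp_carrier)
    interpret dH': group_hom Hpen "xgrp H (n - Suc (Suc 0))" "xbd H (n - Suc 0)"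
      using rxc_bd_group_hom[OF H, of "n - Suc 0"] n3 by (simp add: numeral_2_eq_2)
    have "xbd H (n - Suc 0) (xbd H n b) = \<one>\<^bsub>xgrp H (n - Suc (Suc 0))\<^esub>"
      using abg rxc_bd_bd[OF H, of n b] n3 by (simp add: numeral_2_eq_2)
    moreover have "p (n - Suc (Suc 0)) (xbd Q (n - Suc 0) a) = xbd H (n - Suc 0) (p (n - Suc 0) a)"
      using xmor_bd[OF p_xmor, of "n - Suc 0" a] abg n3 by (simp add: numeral_2_eq_2)
    ultimately show ?thesis
      using abg 2 n3 by (simp add: xbd_pushout_rcos rho1_low rho1_rcos sdp_bd_def sdp_rho1_def sdp_carrier)
  next
    case 3
    then obtain b g where "b \<in> carrier (xgrp H n)" "g \<in> carrier (xgrp G n)" "c = PTop (b, g)"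
      using c by (auto simp: carrier_pushout_top)
    then show ?thesis using 3 by (simp add: xbd_pushout_top rho1_rcos rho1_top sdp_rho1_def sdp_carrier)
  qed
qed

lemma sdp_rho1_act:
  assumes x: "x \<in> carrier (xgrp Q (Suc 0))" and w: "w \<in> carrier SDP"
  shows "sdp_rho1 ((\<lambda>(a, m). (xact Q (n - Suc 0) x a, xact (xprod H G) n (npair p f (Suc 0) x) m)) w)
       = xact H (n - Suc 0) (p (Suc 0) x) (sdp_rho1 w)"
proof -
  obtain a b c where abc: "w = (a, (b, c))" "a \<in> carrier Qpen" "b \<in> carrier (xgrp H n)"
    using w by (auto simp: sdp_carrier)
  have px: "p (Suc 0) x \<in> carrier (xgrp H (Suc 0))"
    using xmor_hom[OF p_xmor, of "Suc 0"] x n3 by (auto simp: hom_def)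
  interpret act: group_hom Hpen Hpen "xact H (n - Suc 0) (p (Suc 0) x)"
    using rxc_act_group_hom[OF H, of "n - Suc 0"] px n3 by simp
  interpret pm: group_hom Qpen Hpen "p (n - Suc 0)" using p_group_hom[of "n - Suc 0"] n3 by simp
  interpret dH: group_hom "xgrp H n" Hpen "xbd H n" by (rule xbd_Hn_group_hom)
  show ?thesis
    using xmor_act[OF p_xmor, of "n - Suc 0" x a] rxc_bd_act[OF H, of n "p (Suc 0) x" b] x px abc n3
    by (simp add: sdp_rho1_def)
qed

lemma rho1_act:
  assumes k: "2 \<le> k" "k \<le> n" and x: "x \<in> carrier (xgrp PO 1)" and c: "c \<in> carrier (xgrp PO k)"
  shows "rho1 k (xact PO k x c) = xact H k (rho1 1 x) (rho1 k c)"
proof -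
  have n1: "Suc 0 \<le> n - 2" using n3 by simp
  obtain x' where x': "x' \<in> carrier (xgrp Q (Suc 0))" "x = PLow x'"
    using x n1 by (auto simp: carrier_pushout_low)
  have rho1_x: "rho1 1 x = p (Suc 0) x'" using x' n1 by (simp add: rho1_low)
  consider "k \<le> n - 2" | "k = n - Suc 0" | "k = n" using k by linarith
  then show ?thesis
  proof cases
    case 1
    then show ?thesis
      using c x' k xmor_act[OF p_xmor, of k x'] rho1_x
      by (auto simp: carrier_pushout_low xact_pushout_low rho1_low)
  next
    case 2
    obtain u where u: "u \<in> carrier SDP" "c = PMid (Rel #>\<^bsub>SDP\<^esub> u)"
      using c 2 by (metis pushout_mid_cases)
    define \<beta> where "\<beta> = (\<lambda>(a, m). (xact Q (n - Suc 0) x' a, xact (xprod H G) n (npair p f (Suc 0) x') m))"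
    have "\<beta> u \<in> \<beta> ` (Rel #>\<^bsub>SDP\<^esub> u)"
      using group.rcos_self[OF group_SDP u(1) subgroup_Rel] by (rule imageI)
    then have "(SOME q. q \<in> \<beta> ` (Rel #>\<^bsub>SDP\<^esub> u)) \<in> \<beta> ` (Rel #>\<^bsub>SDP\<^esub> u)" by (rule someI)
    then obtain w where w: "w \<in> Rel #>\<^bsub>SDP\<^esub> u" "(SOME q. q \<in> \<beta> ` (Rel #>\<^bsub>SDP\<^esub> u)) = \<beta> w" by auto
    have wc: "w \<in> carrier SDP"
      using w(1) subgroup.elemrcos_carrier[OF subgroup_Rel group_SDP u(1)] by blast
    have "Rel #>\<^bsub>SDP\<^esub> w = Rel #>\<^bsub>SDP\<^esub> u"
      using group.repr_independence[OF group_SDP w(1) u(1) subgroup_Rel] by simp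
    then have "sdp_rho1 w = sdp_rho1 u" using rho1_rcos u(1) wc by metis
    moreover have "rho1 k (xact PO k x c) = sdp_rho1 (\<beta> w)"
      using w u x' 2 by (simp add: xact_pushout_mid rho1_mid \<beta>_def)
    ultimately show ?thesis
      unfolding \<beta>_def using sdp_rho1_act[OF x'(1) wc] 2 u rho1_x by (simp add: rho1_rcos)
  next
    case 3
    then show ?thesis
      using c x' rho1_x by (auto simp: carrier_pushout_top xact_pushout_top rho1_top)
  qed
qed

lemma rho1_xmor: "xmor n PO H rho1"
  unfolding xmor_def using rho1_hom rho1_bd rho1_act by simp

lemma rho1_fib: "fib n PO H rho1"
  unfolding fib_def
proof (intro conjI ballI rho1_xmor)
  fix k assume k: "k \<in> {1..n}"
  have surj_p: "p k ` carrier (xgrp Q k) = carrier (xgrp H k)" using p k by (simp add: tfib_def fib_def)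
  consider "k \<le> n - 2" | "k = n - Suc 0" | "k = n" using k by fastforce
  then show "rho1 k ` carrier (xgrp PO k) = carrier (xgrp H k)"
  proof cases
    case 1
    then show ?thesis using surj_p by (simp add: carrier_pushout_low rho1_low image_image)
  next
    case 2
    interpret Hpen: group Hpen by (rule group_Hpen)
    interpret pm: group_hom Qpen Hpen "p (n - Suc 0)" using p_group_hom[of "n - Suc 0"] n3 by simp
    interpret Kn: comm_group Kn by (rule comm_group_Kn)
    interpret dH: group_hom "xgrp H n" Hpen "xbd H n" by (rule xbd_Hn_group_hom)
    have one_G: "\<one>\<^bsub>xgrp G n\<^esub> \<in> carrier (xgrp G n)"
      using group.is_monoid[OF rxc_group[OF G, of n]] n3 by simp
    have "carrier (xgrp H k) \<subseteq> rho1 k ` carrier (xgrp PO k)"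
    proof
      fix y assume "y \<in> carrier (xgrp H k)"
      then obtain a where a: "a \<in> carrier Qpen" "y = p k a" using surj_p 2 by auto
      then have "y = rho1 k (PMid (Rel #>\<^bsub>SDP\<^esub> (a, \<one>\<^bsub>Kn\<^esub>)))"
        using 2 one_G rho1_rcos[of "(a, \<one>\<^bsub>Kn\<^esub>)"] by (simp add: sdp_rho1_def sdp_carrier)
      moreover have "PMid (Rel #>\<^bsub>SDP\<^esub> (a, \<one>\<^bsub>Kn\<^esub>)) \<in> carrier (xgrp PO k)"
        using a 2 one_G rcos_Rel_in_pushout_mid[of "(a, \<one>\<^bsub>Kn\<^esub>)"] by (simp add: sdp_carrier)
      ultimately show "y \<in> rho1 k ` carrier (xgrp PO k)" by (rule image_eqI)
    qed
    then show ?thesis using rho1_hom[of k] k by (auto simp: hom_def)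
  next
    case 3
    have "carrier (xgrp G n) \<noteq> {}" using group.is_monoid[OF rxc_group[OF G, of n]] n3 by auto
    then show ?thesis using 3 by (auto simp: carrier_pushout_top rho1_top image_image)
  qed
qed

lemma p_pi_low:
  assumes k: "1 \<le> k" "k < n"
  shows "\<forall>y\<in>carrier (cycle_grp H k). \<exists>x\<in>carrier (cycle_grp Q k).
           boundaries H k #>\<^bsub>xgrp H k\<^esub> p k x = boundaries H k #>\<^bsub>xgrp H k\<^esub> y"
    and "\<forall>x\<in>carrier (cycle_grp Q k). p k x \<in> boundaries H k \<longrightarrow> x \<in> boundaries Q k"
proof -
  have "pi_low_map H p k \<in> iso (pi_low n Q k) (pi_low n H k)"
    using p k by (simp add: tfib_def weq_def)
  then show "\<forall>y\<in>carrier (cycle_grp H k). \<exists>x\<in>carrier (cycle_grp Q k).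
           boundaries H k #>\<^bsub>xgrp H k\<^esub> p k x = boundaries H k #>\<^bsub>xgrp H k\<^esub> y"
    and "\<forall>x\<in>carrier (cycle_grp Q k). p k x \<in> boundaries H k \<longrightarrow> x \<in> boundaries Q k"
    using pi_low_map_iso_iff[OF rxc_group[OF Q] H p_xmor k rxc_cycle_grp[OF Q k]] by auto
qed

lemma rho1_pi_low_iso_below:
  assumes k: "1 \<le> k" "k \<le> n - 2"
  shows "pi_low_map H rho1 k \<in> iso (pi_low n PO k) (pi_low n H k)"
proof -
  have kn: "k < n" using k n3 by simp
  have "carrier (cycle_grp PO k) = PLow ` carrier (cycle_grp Q k)"
    using cycle_grp_pushout_low[OF k] by (simp add: carrier_lift_monoid)
  then show ?thesis
    using p_pi_low[OF k(1) kn] k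
    by (intro pi_low_map_iso_iff[OF group_pushout H rho1_xmor k(1) kn pushout_low_cycle_grp[OF k], THEN iffD2])
      (auto simp: boundaries_pushout_low[OF k] rho1_low)
qed

lemma rho1_pi_mid_surj:
  assumes y: "y \<in> carrier (cycle_grp H (n - Suc 0))"
  shows "\<exists>X\<in>carrier (cycle_grp PO (n - Suc 0)).
    boundaries H (n - Suc 0) #>\<^bsub>Hpen\<^esub> rho1 (n - Suc 0) X = boundaries H (n - Suc 0) #>\<^bsub>Hpen\<^esub> y"
proof -
  interpret Hpen: group Hpen by (rule group_Hpen)
  interpret pm: group_hom Qpen Hpen "p (n - Suc 0)" using p_group_hom[of "n - Suc 0"] n3 by simp
  interpret dH: group_hom "xgrp H n" Hpen "xbd H n" by (rule xbd_Hn_group_hom)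
  interpret Kn: comm_group Kn by (rule comm_group_Kn)
  have "1 \<le> n - Suc 0" "n - Suc 0 < n" using n3 by auto
  then obtain x where x: "x \<in> carrier (cycle_grp Q (n - Suc 0))"
    "boundaries H (n - Suc 0) #>\<^bsub>Hpen\<^esub> p (n - Suc 0) x = boundaries H (n - Suc 0) #>\<^bsub>Hpen\<^esub> y"
    using p_pi_low(1) y by blast
  then have xQ: "x \<in> carrier Qpen" "xbd Q (n - Suc 0) x = \<one>\<^bsub>Qlow\<^esub>" by (auto simp: cycle_grp_Qpen kernel_def)
  then have u: "(x, \<one>\<^bsub>Kn\<^esub>) \<in> carrier SDP" by (simp add: sdp_carrier del: xgrp_xprod)
  then have "PMid (Rel #>\<^bsub>SDP\<^esub> (x, \<one>\<^bsub>Kn\<^esub>)) \<in> carrier (cycle_grp PO (n - Suc 0))"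
    using xQ rcos_Rel_cycle_iff by (simp add: sdp_bd_def)
  moreover have "rho1 (n - Suc 0) (PMid (Rel #>\<^bsub>SDP\<^esub> (x, \<one>\<^bsub>Kn\<^esub>))) = p (n - Suc 0) x"
    using u xQ by (simp add: rho1_rcos sdp_rho1_def)
  ultimately show ?thesis using x(2) by metis
qed

lemma rho1_pi_mid_inj:
  assumes X: "X \<in> carrier (cycle_grp PO (n - Suc 0))" and rX: "rho1 (n - Suc 0) X \<in> boundaries H (n - Suc 0)"
  shows "X \<in> boundaries PO (n - Suc 0)"
proof -
  interpret Hpen: group Hpen by (rule group_Hpen)
  interpret pm: group_hom Qpen Hpen "p (n - Suc 0)" using p_group_hom[of "n - Suc 0"] n3 by simp
  interpret dH: group_hom "xgrp H n" Hpen "xbd H n" by (rule xbd_Hn_group_hom)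
  obtain u where u: "u \<in> carrier SDP" "X = PMid (Rel #>\<^bsub>SDP\<^esub> u)" "sdp_bd u = \<one>\<^bsub>Qlow\<^esub>"
    using X by (rule pushout_mid_cycle_cases)
  then obtain a b g where abg: "u = (a, (b, g))" "a \<in> carrier Qpen" "b \<in> carrier (xgrp H n)"
    "g \<in> carrier (xgrp G n)" by (auto simp: sdp_carrier)
  have BH: "subgroup (boundaries H (n - Suc 0)) Hpen" unfolding boundaries_pen by (rule dH.img_is_subgroup)
  have "sdp_rho1 u \<in> boundaries H (n - Suc 0)" using rX u by (simp add: rho1_rcos)
  moreover have "p (n - Suc 0) a = sdp_rho1 u \<otimes>\<^bsub>Hpen\<^esub> inv\<^bsub>Hpen\<^esub> (xbd H n b)"
    using abg by (simp add: sdp_rho1_def Hpen.m_assoc)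
  moreover have "xbd H n b \<in> boundaries H (n - Suc 0)" using abg by (simp add: boundaries_pen)
  ultimately have "p (n - Suc 0) a \<in> boundaries H (n - Suc 0)"
    using subgroup.m_closed[OF BH] subgroup.m_inv_closed[OF BH] by simp
  moreover have "a \<in> carrier (cycle_grp Q (n - Suc 0))"
    using abg u by (simp add: cycle_grp_Qpen kernel_def sdp_bd_def)
  moreover have "1 \<le> n - Suc 0" "n - Suc 0 < n" using n3 by auto
  ultimately have "a \<in> boundaries Q (n - Suc 0)" using p_pi_low(2) by blast
  then obtain x where x: "x \<in> carrier (xgrp Q n)" "a = xbd Q n x" by (auto simp: boundaries_pen)
  then show ?thesis using rcos_bd_in_boundaries[OF x(1), of "(b, g)"] u abg by simp
qed

lemma rho1_pi_low_iso:
  assumes k: "1 \<le> k" "k < n"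
  shows "pi_low_map H rho1 k \<in> iso (pi_low n PO k) (pi_low n H k)"
proof (cases "k \<le> n - 2")
  case False
  then have k': "k = n - Suc 0" using k by simp
  have "1 \<le> n - Suc 0" "n - Suc 0 < n" using n3 by auto
  then show ?thesis unfolding k'
    using rho1_pi_mid_surj rho1_pi_mid_inj
    by (intro pi_low_map_iso_iff[OF group_pushout H rho1_xmor _ _ pushout_mid_cycle_grp, THEN iffD2]) auto
qed (use rho1_pi_low_iso_below k in simp)

lemma kernel_pushout_top:
  "kernel (xgrp PO n) (xgrp PO (n - Suc 0)) (xbd PO n) =
   (\<lambda>x. PTop (p n x, f n x)) ` kernel (xgrp Q n) Qpen (xbd Q n)"
proof -
  interpret Qpen: group Qpen by (rule group_Qpen)
  interpret SDP: group SDP by (rule group_SDP)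
  have "PTop m \<in> kernel (xgrp PO n) (xgrp PO (n - Suc 0)) (xbd PO n) \<longleftrightarrow> (\<one>\<^bsub>Qpen\<^esub>, m) \<in> Rel"
    if m: "m \<in> carrier Kn" for m
  proof -
    have "(\<one>\<^bsub>Qpen\<^esub>, m) \<in> carrier SDP" using m by (simp add: sdp_carrier del: xgrp_xprod)
    then show ?thesis
      using m SDP.coset_join1[OF _ _ subgroup_Rel] SDP.coset_join2[OF _ subgroup_Rel]
      by (auto simp: kernel_def carrier_pushout_top xbd_pushout_top one_pushout_mid)
  qed
  moreover have "(\<one>\<^bsub>Qpen\<^esub>, m) \<in> Rel \<longleftrightarrow> (\<exists>x\<in>kernel (xgrp Q n) Qpen (xbd Q n). m = npair p f n x)" for m
  proof -
    have "(\<one>\<^bsub>Qpen\<^esub>, m) = rel_gen x \<longleftrightarrow> xbd Q n x = \<one>\<^bsub>Qpen\<^esub> \<and> m = npair p f n x"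
      if "x \<in> carrier (xgrp Q n)" for x
    proof -
      have "rel_gen x = (\<one>\<^bsub>Qpen\<^esub>, m) \<longleftrightarrow> xbd Q n x = \<one>\<^bsub>Qpen\<^esub> \<and> m = npair p f n x"
        using that bd_Qn_closed by (auto simp: rel_gen_def)
      then show ?thesis by metis
    qed
    then show ?thesis unfolding Rel_eq kernel_def image_iff by (auto simp del: npair_app)
  qed
  ultimately show ?thesis
    using nab_n_closed by (auto simp: kernel_def[of "xgrp PO n"] carrier_pushout_top kernel_def[of "xgrp Q n"])
qed

lemma rho1_pi_top_iso: "rho1 n \<in> iso (pi_top n PO) (pi_top n H)"
proof -
  have "bij_betw (p n) (kernel (xgrp Q n) Qpen (xbd Q n)) (kernel (xgrp H n) Hpen (xbd H n))"
    using p by (simp add: tfib_def weq_def iso_def pi_top_def)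
  then have bij: "bij_betw (rho1 n) (carrier (pi_top n PO)) (carrier (pi_top n H))"
    by (auto simp: pi_top_def kernel_pushout_top bij_betw_def inj_on_def image_image rho1_top)
  have "rho1 n (x \<otimes>\<^bsub>pi_top n PO\<^esub> y) = rho1 n x \<otimes>\<^bsub>pi_top n H\<^esub> rho1 n y"
    if "x \<in> carrier (pi_top n PO)" "y \<in> carrier (pi_top n PO)" for x y
    using that rho1_hom[of n] n3 by (auto simp: pi_top_def kernel_def hom_def)
  then have "rho1 n \<in> hom (pi_top n PO) (pi_top n H)"
    using bij by (auto intro!: homI simp: bij_betw_def)
  then show ?thesis using bij by (simp add: iso_def)
qed

lemma rho1_tfib: "tfib n PO H rho1"
  unfolding tfib_def weq_def using rho1_fib rho1_xmor rho1_pi_low_iso rho1_pi_top_iso by auto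

end

theorem mainTheorem2:
  fixes n :: nat
    and Q :: "'q xcx" and H :: "'h xcx" and G :: "'g xcx"
    and p :: "nat \<Rightarrow> 'q \<Rightarrow> 'h" and f :: "nat \<Rightarrow> 'q \<Rightarrow> 'g"
  assumes "n \<ge> 3"
    and "rxc n Q" and "rxc n H" and "rxc n G"
    and "tfib n Q H p"
    and "xmor n Q G f"
  shows "tfib n (pushout n Q (xprod H G) (npair p f)) H
           (xcomp proj1 (po_rho n Q (xprod H G) (npair p f)))"
proof -
  interpret tfib_pushout n Q H G p f by unfold_locales (use assms in auto)
  show ?thesis by (rule rho1_tfib)
qed

end
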